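(* Let $\mathscr{A}$ be a pointed category with finite coproducts and cokernels, $\mathbb{T}$ a finite category and $\mathbb{S}$ a replete full subcategory of $\mathbb{T}$. Then the full subcategory $\mathscr{F}$ of $\mathscr{A}^\mathbb{T}$ consisting of the functors $F$ with $F(T)=0$ for all $T\notin\mathbb{S}$ is a normal epi-reflective subcategory of $\mathscr{A}^\mathbb{T}$, the reflection of $F$ being given pointwise by $T\mapsto\mathrm{Cok}([F(t)]_{t\in[T]})$ with unit components $\mathrm{cok}([F(t)]_{t\in[T]})$.
   Context: For $T\in\mathbb{T}$, $[T]$ is the finite set of morphisms $t:T'\to T$ in $\mathbb{T}$ with $T'\notin\mathbb{S}$, $d(t):=T'$, and $[F(t)]_{t\in[T]}:\bigoplus_{t\in[T]}F(d(t))\to F(T)$ is the morphism induced by the $F(t)$ via the coproduct. A subcategory is normal epi-reflective if it is reflective and every unit component is a normal epimorphism (a cokernel of some morphism). *)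

theory Defs
  imports "HOL-Library.FuncSet"
begin

text \<open>Categories, given by a set of objects, a set of arrows, domain, codomain,
identities and composition (cmp g f = g o f).\<close>

record ('o,'m) cat =
  Obj :: "'o set"
  Arr :: "'m set"
  Dom :: "'m \<Rightarrow> 'o"
  Cod :: "'m \<Rightarrow> 'o"
  Idm :: "'o \<Rightarrow> 'm"
  Cmp :: "'m \<Rightarrow> 'm \<Rightarrow> 'm"

definition hom :: "('o,'m) cat \<Rightarrow> 'o \<Rightarrow> 'o \<Rightarrow> 'm set" where
  "hom C a b = {f \<in> Arr C. Dom C f = a \<and> Cod C f = b}"

definition category :: "('o,'m) cat \<Rightarrow> bool" where
  "category C \<longleftrightarrow>
     (\<forall>f \<in> Arr C. Dom C f \<in> Obj C \<and> Cod C f \<in> Obj C) \<and>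
     (\<forall>a \<in> Obj C. Idm C a \<in> hom C a a) \<and>
     (\<forall>f \<in> Arr C. \<forall>g \<in> Arr C. Cod C f = Dom C g \<longrightarrow>
         Cmp C g f \<in> hom C (Dom C f) (Cod C g)) \<and>
     (\<forall>f \<in> Arr C. Cmp C (Idm C (Cod C f)) f = f \<and> Cmp C f (Idm C (Dom C f)) = f) \<and>
     (\<forall>f \<in> Arr C. \<forall>g \<in> Arr C. \<forall>h \<in> Arr C.
         Cod C f = Dom C g \<and> Cod C g = Dom C h \<longrightarrow>
         Cmp C h (Cmp C g f) = Cmp C (Cmp C h g) f)"

definition finite_category :: "('o,'m) cat \<Rightarrow> bool" where
  "finite_category C \<longleftrightarrow> category C \<and> finite (Obj C) \<and> finite (Arr C)"

definition is_iso :: "('o,'m) cat \<Rightarrow> 'm \<Rightarrow> bool" where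
  "is_iso C f \<longleftrightarrow> f \<in> Arr C \<and>
     (\<exists>g \<in> hom C (Cod C f) (Dom C f).
        Cmp C g f = Idm C (Dom C f) \<and> Cmp C f g = Idm C (Cod C f))"

definition replete_full_subcat :: "('o,'m) cat \<Rightarrow> 'o set \<Rightarrow> bool" where
  "replete_full_subcat C S \<longleftrightarrow> S \<subseteq> Obj C \<and>
     (\<forall>f. is_iso C f \<and> Dom C f \<in> S \<longrightarrow> Cod C f \<in> S)"

definition is_initial :: "('o,'m) cat \<Rightarrow> 'o \<Rightarrow> bool" where
  "is_initial C z \<longleftrightarrow> z \<in> Obj C \<and> (\<forall>a \<in> Obj C. \<exists>!f. f \<in> hom C z a)"

definition is_terminal :: "('o,'m) cat \<Rightarrow> 'o \<Rightarrow> bool" where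
  "is_terminal C z \<longleftrightarrow> z \<in> Obj C \<and> (\<forall>a \<in> Obj C. \<exists>!f. f \<in> hom C a z)"

definition is_zero_obj :: "('o,'m) cat \<Rightarrow> 'o \<Rightarrow> bool" where
  "is_zero_obj C z \<longleftrightarrow> is_initial C z \<and> is_terminal C z"

definition pointed :: "('o,'m) cat \<Rightarrow> bool" where
  "pointed C \<longleftrightarrow> (\<exists>z. is_zero_obj C z)"

definition is_zero_arr :: "('o,'m) cat \<Rightarrow> 'm \<Rightarrow> bool" where
  "is_zero_arr C f \<longleftrightarrow> f \<in> Arr C \<and>
     (\<exists>z g h. is_zero_obj C z \<and> g \<in> hom C (Dom C f) z \<and> h \<in> hom C z (Cod C f)
              \<and> f = Cmp C h g)"

definition is_coproduct ::
  "('o,'m) cat \<Rightarrow> 'i set \<Rightarrow> ('i \<Rightarrow> 'o) \<Rightarrow> 'o \<Rightarrow> ('i \<Rightarrow> 'm) \<Rightarrow> bool" where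
  "is_coproduct C I X P \<iota> \<longleftrightarrow> P \<in> Obj C \<and>
     (\<forall>i \<in> I. \<iota> i \<in> hom C (X i) P) \<and>
     (\<forall>Y \<in> Obj C. \<forall>f. (\<forall>i \<in> I. f i \<in> hom C (X i) Y) \<longrightarrow>
        (\<exists>!h. h \<in> hom C P Y \<and> (\<forall>i \<in> I. Cmp C h (\<iota> i) = f i)))"

definition has_finite_coproducts :: "('o,'m) cat \<Rightarrow> bool" where
  "has_finite_coproducts C \<longleftrightarrow>
     (\<forall>(n::nat) (X::nat \<Rightarrow> 'o). (\<forall>i < n. X i \<in> Obj C) \<longrightarrow>
        (\<exists>P \<iota>. is_coproduct C {..<n} X P \<iota>))"

definition is_cokernel :: "('o,'m) cat \<Rightarrow> 'm \<Rightarrow> 'm \<Rightarrow> bool" where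
  "is_cokernel C f q \<longleftrightarrow> f \<in> Arr C \<and> q \<in> Arr C \<and> Dom C q = Cod C f \<and>
     is_zero_arr C (Cmp C q f) \<and>
     (\<forall>g \<in> Arr C. Dom C g = Cod C f \<and> is_zero_arr C (Cmp C g f) \<longrightarrow>
        (\<exists>!h. h \<in> hom C (Cod C q) (Cod C g) \<and> Cmp C h q = g))"

definition has_cokernels :: "('o,'m) cat \<Rightarrow> bool" where
  "has_cokernels C \<longleftrightarrow> (\<forall>f \<in> Arr C. \<exists>q. is_cokernel C f q)"

definition normal_epi :: "('o,'m) cat \<Rightarrow> 'm \<Rightarrow> bool" where
  "normal_epi C q \<longleftrightarrow> (\<exists>f. is_cokernel C f q)"

definition is_reflection :: "('o,'m) cat \<Rightarrow> 'o set \<Rightarrow> 'o \<Rightarrow> 'o \<Rightarrow> 'm \<Rightarrow> bool" where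
  "is_reflection C D c r u \<longleftrightarrow> r \<in> D \<and> u \<in> hom C c r \<and>
     (\<forall>d \<in> D. \<forall>f \<in> hom C c d. \<exists>!g. g \<in> hom C r d \<and> Cmp C g u = f)"

definition reflective :: "('o,'m) cat \<Rightarrow> 'o set \<Rightarrow> bool" where
  "reflective C D \<longleftrightarrow> D \<subseteq> Obj C \<and> (\<forall>c \<in> Obj C. \<exists>r u. is_reflection C D c r u)"

text \<open>Normal epi-reflective: reflective and every unit component is a normal
epimorphism (units are unique up to isomorphism, so we require it of every
reflection arrow).\<close>

definition normal_epi_reflective :: "('o,'m) cat \<Rightarrow> 'o set \<Rightarrow> bool" where
  "normal_epi_reflective C D \<longleftrightarrow> reflective C D \<and>
     (\<forall>c r u. c \<in> Obj C \<and> is_reflection C D c r u \<longrightarrow> normal_epi C u)"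

type_synonym ('to,'tm,'ao,'am) ftor = "('to \<Rightarrow> 'ao) \<times> ('tm \<Rightarrow> 'am)"

definition is_functor :: "('to,'tm) cat \<Rightarrow> ('ao,'am) cat \<Rightarrow> ('to,'tm,'ao,'am) ftor \<Rightarrow> bool" where
  "is_functor T A F \<longleftrightarrow>
     (\<forall>x \<in> Obj T. fst F x \<in> Obj A) \<and>
     (\<forall>f \<in> Arr T. snd F f \<in> hom A (fst F (Dom T f)) (fst F (Cod T f))) \<and>
     (\<forall>x \<in> Obj T. snd F (Idm T x) = Idm A (fst F x)) \<and>
     (\<forall>f \<in> Arr T. \<forall>g \<in> Arr T. Cod T f = Dom T g \<longrightarrow>
        snd F (Cmp T g f) = Cmp A (snd F g) (snd F f)) \<and>
     (\<forall>x. x \<notin> Obj T \<longrightarrow> fst F x = undefined) \<and>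
     (\<forall>f. f \<notin> Arr T \<longrightarrow> snd F f = undefined)"

definition nat_trans ::
  "('to,'tm) cat \<Rightarrow> ('ao,'am) cat \<Rightarrow> ('to,'tm,'ao,'am) ftor \<Rightarrow> ('to,'tm,'ao,'am) ftor
     \<Rightarrow> ('to \<Rightarrow> 'am) \<Rightarrow> bool" where
  "nat_trans T A F G \<eta> \<longleftrightarrow> is_functor T A F \<and> is_functor T A G \<and>
     (\<forall>x \<in> Obj T. \<eta> x \<in> hom A (fst F x) (fst G x)) \<and>
     (\<forall>f \<in> Arr T. Cmp A (\<eta> (Cod T f)) (snd F f) = Cmp A (snd G f) (\<eta> (Dom T f))) \<and>
     (\<forall>x. x \<notin> Obj T \<longrightarrow> \<eta> x = undefined)"

definition funcat :: "('ao,'am) cat \<Rightarrow> ('to,'tm) cat \<Rightarrow>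
   (('to,'tm,'ao,'am) ftor,
    ('to,'tm,'ao,'am) ftor \<times> ('to,'tm,'ao,'am) ftor \<times> ('to \<Rightarrow> 'am)) cat" where
  "funcat A T = \<lparr>
     Obj = {F. is_functor T A F},
     Arr = {(F, G, \<eta>). nat_trans T A F G \<eta>},
     Dom = (\<lambda>(F, G, \<eta>). F),
     Cod = (\<lambda>(F, G, \<eta>). G),
     Idm = (\<lambda>F. (F, F, (\<lambda>x \<in> Obj T. Idm A (fst F x)))),
     Cmp = (\<lambda>(G', H, \<theta>) (F, G, \<eta>). (F, H, (\<lambda>x \<in> Obj T. Cmp A (\<theta> x) (\<eta> x))))\<rparr>"

text \<open>[x]: morphisms t : x' \<rightarrow> x of T with x' not in S.\<close>

definition bracket :: "('to,'tm) cat \<Rightarrow> 'to set \<Rightarrow> 'to \<Rightarrow> 'tm set" where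
  "bracket T S x = {t \<in> Arr T. Cod T t = x \<and> Dom T t \<notin> S}"

definition vanishing_outside ::
  "('ao,'am) cat \<Rightarrow> ('to,'tm) cat \<Rightarrow> 'to set \<Rightarrow> ('to,'tm,'ao,'am) ftor set" where
  "vanishing_outside A T S =
     {F. is_functor T A F \<and> (\<forall>x \<in> Obj T - S. is_zero_obj A (fst F x))}"

end

theory Submission
  imports Defs
begin

text \<open>
  For a functor F let \<sigma> x : P x \<rightarrow> F x be the copairing of the F t, t \<in> [x], and q x its
  cokernel. Cokernels in a functor category are computed pointwise, so the q x assemble into a
  functor R and a natural transformation q : F \<Rightarrow> R that is the cokernel of \<sigma> : P \<Rightarrow> F.
  R vanishes outside S, and every \<theta> : F \<Rightarrow> G with G vanishing outside S kills \<sigma>, since each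
  summand F (Dom t) of P x is indexed by some Dom t \<notin> S. Hence q is the reflection of F; as a
  cokernel it is a normal epimorphism, and every other reflection arrow differs from it by an
  isomorphism.
\<close>

lemma ex1_unique: "\<exists>!x. P x \<Longrightarrow> P a \<Longrightarrow> P b \<Longrightarrow> a = b"
  by blast

lemma homD: "f \<in> hom C a b \<Longrightarrow> f \<in> Arr C \<and> Dom C f = a \<and> Cod C f = b"
  by (simp add: hom_def)

lemma arr_in_hom: "f \<in> Arr C \<Longrightarrow> f \<in> hom C (Dom C f) (Cod C f)"
  by (simp add: hom_def)

lemma cat_obj_dom: "category C \<Longrightarrow> f \<in> hom C a b \<Longrightarrow> a \<in> Obj C"
  unfolding category_def hom_def by auto

lemma cat_obj_cod: "category C \<Longrightarrow> f \<in> hom C a b \<Longrightarrow> b \<in> Obj C"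
  unfolding category_def hom_def by auto

lemma cat_id: "category C \<Longrightarrow> a \<in> Obj C \<Longrightarrow> Idm C a \<in> hom C a a"
  unfolding category_def by auto

lemma cat_comp: "category C \<Longrightarrow> f \<in> hom C a b \<Longrightarrow> g \<in> hom C b c \<Longrightarrow> Cmp C g f \<in> hom C a c"
  unfolding category_def hom_def by auto

lemma cat_idl: "category C \<Longrightarrow> f \<in> hom C a b \<Longrightarrow> Cmp C (Idm C b) f = f"
  unfolding category_def hom_def by auto

lemma cat_idr: "category C \<Longrightarrow> f \<in> hom C a b \<Longrightarrow> Cmp C f (Idm C a) = f"
  unfolding category_def hom_def by auto

lemma cat_assoc:
  "category C \<Longrightarrow> f \<in> hom C a b \<Longrightarrow> g \<in> hom C b c \<Longrightarrow> h \<in> hom C c d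
   \<Longrightarrow> Cmp C h (Cmp C g f) = Cmp C (Cmp C h g) f"
  unfolding category_def hom_def by auto

lemma categoryI:
  assumes "\<And>f. f \<in> Arr C \<Longrightarrow> Dom C f \<in> Obj C \<and> Cod C f \<in> Obj C"
    and "\<And>a. a \<in> Obj C \<Longrightarrow> Idm C a \<in> hom C a a"
    and "\<And>f g a b c. f \<in> hom C a b \<Longrightarrow> g \<in> hom C b c \<Longrightarrow> Cmp C g f \<in> hom C a c"
    and "\<And>f a b. f \<in> hom C a b \<Longrightarrow> Cmp C (Idm C b) f = f \<and> Cmp C f (Idm C a) = f"
    and "\<And>f g h a b c d. f \<in> hom C a b \<Longrightarrow> g \<in> hom C b c \<Longrightarrow> h \<in> hom C c d
           \<Longrightarrow> Cmp C h (Cmp C g f) = Cmp C (Cmp C h g) f"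
  shows "category C"
  unfolding category_def
proof (intro conjI ballI impI)
  fix f g h assume "f \<in> Arr C" "g \<in> Arr C" "h \<in> Arr C"
    and "Cod C f = Dom C g \<and> Cod C g = Dom C h"
  then show "Cmp C h (Cmp C g f) = Cmp C (Cmp C h g) f"
    using assms(5) arr_in_hom by metis
qed (use assms arr_in_hom in metis)+

lemma zero_obj_in_Obj: "is_zero_obj C z \<Longrightarrow> z \<in> Obj C"
  unfolding is_zero_obj_def is_initial_def by auto

lemma zero_obj_arr_from: "is_zero_obj C z \<Longrightarrow> a \<in> Obj C \<Longrightarrow> \<exists>!f. f \<in> hom C z a"
  unfolding is_zero_obj_def is_initial_def by auto

lemma zero_obj_arr_to: "is_zero_obj C z \<Longrightarrow> a \<in> Obj C \<Longrightarrow> \<exists>!f. f \<in> hom C a z"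
  unfolding is_zero_obj_def is_terminal_def by auto

lemma zero_obj_arr_from_unique:
  "category C \<Longrightarrow> is_zero_obj C z \<Longrightarrow> f \<in> hom C z a \<Longrightarrow> g \<in> hom C z a \<Longrightarrow> f = g"
  using zero_obj_arr_from cat_obj_cod by metis

lemma zero_obj_arr_to_unique:
  "category C \<Longrightarrow> is_zero_obj C z \<Longrightarrow> f \<in> hom C a z \<Longrightarrow> g \<in> hom C a z \<Longrightarrow> f = g"
  using zero_obj_arr_to cat_obj_dom by metis

lemma zero_arr_through_zero_obj:
  assumes "category C" "is_zero_obj C z" "g \<in> hom C a z" "h \<in> hom C z b"
  shows "is_zero_arr C (Cmp C h g)"
  using cat_comp[OF assms(1,3,4)] assms(2-4) unfolding is_zero_arr_def hom_def by auto

lemma zero_arrE: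
  assumes "is_zero_arr C f"
  obtains z g h where "is_zero_obj C z" "g \<in> hom C (Dom C f) z" "h \<in> hom C z (Cod C f)"
    "f = Cmp C h g"
  using assms unfolding is_zero_arr_def by blast

lemma zero_arr_unique:
  assumes C: "category C" and f: "is_zero_arr C f" "f \<in> hom C a b"
    and g: "is_zero_arr C g" "g \<in> hom C a b"
  shows "f = g"
proof -
  obtain z f1 f2 where z: "is_zero_obj C z" "f1 \<in> hom C a z" "f2 \<in> hom C z b" "f = Cmp C f2 f1"
    using zero_arrE[OF f(1)] homD[OF f(2)] by metis
  obtain z' g1 g2 where z': "is_zero_obj C z'" "g1 \<in> hom C a z'" "g2 \<in> hom C z' b"
    "g = Cmp C g2 g1"
    using zero_arrE[OF g(1)] homD[OF g(2)] by metis
  obtain k where k: "k \<in> hom C z' z"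
    using zero_obj_arr_from[OF z'(1) zero_obj_in_Obj[OF z(1)]] by blast
  have "f1 = Cmp C k g1"
    using zero_obj_arr_to_unique[OF C z(1) z(2) cat_comp[OF C z'(2) k]] .
  moreover have "g2 = Cmp C f2 k"
    using zero_obj_arr_from_unique[OF C z'(1) z'(3) cat_comp[OF C k z(3)]] .
  ultimately show ?thesis
    using z(4) z'(4) cat_assoc[OF C z'(2) k z(3)] by simp
qed

lemma zero_arr_comp_left:
  assumes C: "category C" and f: "is_zero_arr C f" and g: "g \<in> hom C (Cod C f) c"
  shows "is_zero_arr C (Cmp C g f)"
proof -
  obtain z f1 f2 where z: "is_zero_obj C z" "f1 \<in> hom C (Dom C f) z" "f2 \<in> hom C z (Cod C f)"
    "f = Cmp C f2 f1"
    using zero_arrE[OF f] by blast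
  have "Cmp C g f = Cmp C (Cmp C g f2) f1"
    using cat_assoc[OF C z(2,3) g] z(4) by simp
  then show ?thesis
    using zero_arr_through_zero_obj[OF C z(1,2) cat_comp[OF C z(3) g]] by simp
qed

lemma zero_arr_comp_right:
  assumes C: "category C" and f: "is_zero_arr C f" and g: "g \<in> hom C a (Dom C f)"
  shows "is_zero_arr C (Cmp C f g)"
proof -
  obtain z f1 f2 where z: "is_zero_obj C z" "f1 \<in> hom C (Dom C f) z" "f2 \<in> hom C z (Cod C f)"
    "f = Cmp C f2 f1"
    using zero_arrE[OF f] by blast
  have "Cmp C f g = Cmp C f2 (Cmp C f1 g)"
    using cat_assoc[OF C g z(2,3)] z(4) by simp
  then show ?thesis
    using zero_arr_through_zero_obj[OF C z(1) cat_comp[OF C g z(2)] z(3)] by simp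
qed

lemma zero_arr_exists:
  assumes C: "category C" and "pointed C" and "a \<in> Obj C" and "b \<in> Obj C"
  shows "\<exists>f \<in> hom C a b. is_zero_arr C f"
proof -
  obtain z where z: "is_zero_obj C z" using \<open>pointed C\<close> unfolding pointed_def by blast
  obtain g h where "g \<in> hom C a z" "h \<in> hom C z b"
    using zero_obj_arr_to[OF z \<open>a \<in> Obj C\<close>] zero_obj_arr_from[OF z \<open>b \<in> Obj C\<close>] by blast
  then show ?thesis using zero_arr_through_zero_obj[OF C z] cat_comp[OF C] by blast
qed

lemma zero_obj_if_id_zero:
  assumes C: "category C" and r: "r \<in> Obj C" and z: "is_zero_arr C (Idm C r)"
  shows "is_zero_obj C r"
proof -
  obtain z g h where gh: "is_zero_obj C z" "g \<in> hom C r z" "h \<in> hom C z r"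
    "Idm C r = Cmp C h g"
    using zero_arrE[OF z] homD[OF cat_id[OF C r]] by metis
  have from_r: "f = Cmp C (Cmp C f h) g" if "f \<in> hom C r a" for f a
    using cat_assoc[OF C gh(2,3) that] cat_idr[OF C that] gh(4) by simp
  have to_r: "f = Cmp C h (Cmp C g f)" if "f \<in> hom C a r" for f a
    using cat_assoc[OF C that gh(2,3)] cat_idl[OF C that] gh(4) by simp
  have "\<exists>!f. f \<in> hom C r a" if a: "a \<in> Obj C" for a
  proof -
    obtain k where k: "k \<in> hom C z a" using zero_obj_arr_from[OF gh(1) a] by blast
    have "f = Cmp C k g" if "f \<in> hom C r a" for f
      using from_r[OF that] zero_obj_arr_from_unique[OF C gh(1) cat_comp[OF C gh(3) that] k]
      by simp
    then show ?thesis using cat_comp[OF C gh(2) k] by blast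
  qed
  moreover have "\<exists>!f. f \<in> hom C a r" if a: "a \<in> Obj C" for a
  proof -
    obtain k where k: "k \<in> hom C a z" using zero_obj_arr_to[OF gh(1) a] by blast
    have "f = Cmp C h k" if "f \<in> hom C a r" for f
      using to_r[OF that] zero_obj_arr_to_unique[OF C gh(1) cat_comp[OF C that gh(2)] k]
      by simp
    then show ?thesis using cat_comp[OF C k gh(3)] by blast
  qed
  ultimately show ?thesis
    unfolding is_zero_obj_def is_initial_def is_terminal_def using r by blast
qed

lemma coproduct_obj: "is_coproduct C I X P \<iota> \<Longrightarrow> P \<in> Obj C"
  unfolding is_coproduct_def by blast

lemma coproduct_inj: "is_coproduct C I X P \<iota> \<Longrightarrow> i \<in> I \<Longrightarrow> \<iota> i \<in> hom C (X i) P"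
  unfolding is_coproduct_def by blast

lemma coproduct_copair:
  assumes "is_coproduct C I X P \<iota>" and "Y \<in> Obj C" and "\<And>i. i \<in> I \<Longrightarrow> f i \<in> hom C (X i) Y"
  shows "\<exists>!h. h \<in> hom C P Y \<and> (\<forall>i \<in> I. Cmp C h (\<iota> i) = f i)"
proof -
  have "\<forall>Y \<in> Obj C. \<forall>f. (\<forall>i \<in> I. f i \<in> hom C (X i) Y) \<longrightarrow>
          (\<exists>!h. h \<in> hom C P Y \<and> (\<forall>i \<in> I. Cmp C h (\<iota> i) = f i))"
    using assms(1) unfolding is_coproduct_def by (elim conjE)
  with assms(2,3) show ?thesis by blast
qed

lemma coproduct_arr_eqI:
  assumes C: "category C" and cp: "is_coproduct C I X P \<iota>"
    and h: "h \<in> hom C P Y" and h': "h' \<in> hom C P Y"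
    and eq: "\<And>i. i \<in> I \<Longrightarrow> Cmp C h (\<iota> i) = Cmp C h' (\<iota> i)"
  shows "h = h'"
proof -
  have "\<exists>!k. k \<in> hom C P Y \<and> (\<forall>i \<in> I. Cmp C k (\<iota> i) = Cmp C h (\<iota> i))"
    by (rule coproduct_copair[OF cp cat_obj_cod[OF C h] cat_comp[OF C coproduct_inj[OF cp] h]])
  with h h' eq show ?thesis by metis
qed

lemma coproduct_zero_arrI:
  assumes C: "category C" and "pointed C" and cp: "is_coproduct C I X P \<iota>"
    and h: "h \<in> hom C P Y" and z: "\<And>i. i \<in> I \<Longrightarrow> is_zero_arr C (Cmp C h (\<iota> i))"
  shows "is_zero_arr C h"
proof -
  obtain h0 where h0: "h0 \<in> hom C P Y" "is_zero_arr C h0"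
    using zero_arr_exists[OF C \<open>pointed C\<close> coproduct_obj[OF cp] cat_obj_cod[OF C h]] by blast
  have "h = h0"
  proof (rule coproduct_arr_eqI[OF C cp h h0(1)])
    fix i assume i: "i \<in> I"
    note \<iota>i = coproduct_inj[OF cp i]
    have "is_zero_arr C (Cmp C h0 (\<iota> i))"
      using zero_arr_comp_right[OF C h0(2)] \<iota>i homD[OF h0(1)] by simp
    then show "Cmp C h (\<iota> i) = Cmp C h0 (\<iota> i)"
      using zero_arr_unique[OF C z[OF i] cat_comp[OF C \<iota>i h] _ cat_comp[OF C \<iota>i h0(1)]] by blast
  qed
  with h0 show ?thesis by simp
qed

lemma coproduct_reindex:
  assumes e: "bij_betw e K I" and cp: "is_coproduct C K (X \<circ> e) P \<iota>"
  shows "is_coproduct C I X P (\<iota> \<circ> the_inv_into K e)"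
proof -
  define d where "d = the_inv_into K e"
  have d: "bij_betw d I K" using bij_betw_the_inv_into[OF e] unfolding d_def .
  have ed: "e (d i) = i" if "i \<in> I" for i
    using f_the_inv_into_f_bij_betw[OF e that] unfolding d_def .
  have de: "d (e k) = k" if "k \<in> K" for k
    using e that unfolding d_def by (simp add: bij_betw_def the_inv_into_f_f)
  have "is_coproduct C I X P (\<iota> \<circ> d)"
    unfolding is_coproduct_def
  proof (intro conjI ballI allI impI)
    show "P \<in> Obj C" using coproduct_obj[OF cp] .
  next
    fix i assume "i \<in> I"
    then show "(\<iota> \<circ> d) i \<in> hom C (X i) P"
      using coproduct_inj[OF cp bij_betw_apply[OF d \<open>i \<in> I\<close>]] ed[OF \<open>i \<in> I\<close>] by simp
  next
    fix Y f assume Y: "Y \<in> Obj C" and f: "\<forall>i\<in>I. f i \<in> hom C (X i) Y"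
    have "\<exists>!h. h \<in> hom C P Y \<and> (\<forall>k \<in> K. Cmp C h (\<iota> k) = (f \<circ> e) k)"
      by (rule coproduct_copair[OF cp Y]) (use f bij_betw_apply[OF e] in simp)
    moreover have "(\<forall>k \<in> K. Cmp C h (\<iota> k) = (f \<circ> e) k) \<longleftrightarrow>
        (\<forall>i \<in> I. Cmp C h ((\<iota> \<circ> d) i) = f i)" for h
    proof (intro iffI ballI)
      fix i assume "\<forall>k \<in> K. Cmp C h (\<iota> k) = (f \<circ> e) k" and "i \<in> I"
      then show "Cmp C h ((\<iota> \<circ> d) i) = f i" using bij_betw_apply[OF d] ed by simp
    next
      fix k assume "\<forall>i \<in> I. Cmp C h ((\<iota> \<circ> d) i) = f i" and "k \<in> K"
      then show "Cmp C h (\<iota> k) = (f \<circ> e) k" using bij_betw_apply[OF e] de by force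
    qed
    ultimately show "\<exists>!h. h \<in> hom C P Y \<and> (\<forall>i\<in>I. Cmp C h ((\<iota> \<circ> d) i) = f i)"
      by simp
  qed
  then show ?thesis unfolding d_def .
qed

text \<open>Finite coproducts are only assumed for families indexed by {..<n}.\<close>

lemma finite_coproduct_exists:
  assumes fc: "has_finite_coproducts C" and I: "finite I"
    and X: "\<And>i. i \<in> I \<Longrightarrow> X i \<in> Obj C"
  shows "\<exists>P \<iota>. is_coproduct C I X P \<iota>"
proof -
  obtain e where e: "bij_betw e {..<card I} I"
    using ex_bij_betw_nat_finite[OF I] by (auto simp: atLeast0LessThan)
  have "\<forall>k < card I. (X \<circ> e) k \<in> Obj C" using X bij_betw_apply[OF e] by simp
  then obtain P \<iota> where "is_coproduct C {..<card I} (X \<circ> e) P \<iota>"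
    using fc unfolding has_finite_coproducts_def by blast
  from coproduct_reindex[OF e this] show ?thesis by blast
qed

lemma cokernel_hom: "is_cokernel C f q \<Longrightarrow> q \<in> hom C (Cod C f) (Cod C q)"
  unfolding is_cokernel_def hom_def by (elim conjE) simp

lemma cokernel_zero_comp: "is_cokernel C f q \<Longrightarrow> is_zero_arr C (Cmp C q f)"
  unfolding is_cokernel_def by (elim conjE)

lemma cokernel_factor:
  assumes ck: "is_cokernel C f q" and g: "g \<in> hom C (Cod C f) Y"
    and z: "is_zero_arr C (Cmp C g f)"
  shows "\<exists>!h. h \<in> hom C (Cod C q) Y \<and> Cmp C h q = g"
proof -
  have "\<forall>g \<in> Arr C. Dom C g = Cod C f \<and> is_zero_arr C (Cmp C g f) \<longrightarrow>
          (\<exists>!h. h \<in> hom C (Cod C q) (Cod C g) \<and> Cmp C h q = g)"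
    using ck unfolding is_cokernel_def by (elim conjE)
  then have "\<exists>!h. h \<in> hom C (Cod C q) (Cod C g) \<and> Cmp C h q = g"
    using homD[OF g] z by blast
  then show ?thesis using homD[OF g] by simp
qed

lemma cokernel_epi:
  assumes C: "category C" and ck: "is_cokernel C f q"
    and h: "h \<in> hom C (Cod C q) Y" and h': "h' \<in> hom C (Cod C q) Y"
    and eq: "Cmp C h q = Cmp C h' q"
  shows "h = h'"
proof -
  have "f \<in> Arr C" using ck unfolding is_cokernel_def by (elim conjE)
  note f = arr_in_hom[OF this]
  note q = cokernel_hom[OF ck]
  have "is_zero_arr C (Cmp C h (Cmp C q f))"
    using zero_arr_comp_left[OF C cokernel_zero_comp[OF ck]] h homD[OF cat_comp[OF C f q]] by simp
  then have "is_zero_arr C (Cmp C (Cmp C h q) f)"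
    using cat_assoc[OF C f q h] by simp
  from ex1_unique[OF cokernel_factor[OF ck cat_comp[OF C q h] this]] h h' eq show ?thesis by simp
qed

lemma cokernel_comp_iso_factor:
  assumes C: "category C" and ck: "is_cokernel C f q"
    and \<phi>: "\<phi> \<in> hom C (Cod C q) r" and \<psi>: "\<psi> \<in> hom C r (Cod C q)"
    and \<psi>\<phi>: "Cmp C \<psi> \<phi> = Idm C (Cod C q)" and \<phi>\<psi>: "Cmp C \<phi> \<psi> = Idm C r"
    and g: "g \<in> hom C (Cod C f) Y" "is_zero_arr C (Cmp C g f)"
  shows "\<exists>!h. h \<in> hom C r Y \<and> Cmp C h (Cmp C \<phi> q) = g"
proof -
  note q = cokernel_hom[OF ck]
  obtain h where h: "h \<in> hom C (Cod C q) Y" "Cmp C h q = g"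
    using cokernel_factor[OF ck g] by blast
  have restore: "Cmp C (Cmp C k \<phi>) q = Cmp C k (Cmp C \<phi> q)" if "k \<in> hom C r Y" for k
    using cat_assoc[OF C q \<phi> that] by simp
  show ?thesis
  proof (rule ex1I[of _ "Cmp C h \<psi>"])
    have "Cmp C (Cmp C h \<psi>) \<phi> = h"
      using cat_assoc[OF C \<phi> \<psi> h(1)] \<psi>\<phi> cat_idr[OF C h(1)] by simp
    then show "Cmp C h \<psi> \<in> hom C r Y \<and> Cmp C (Cmp C h \<psi>) (Cmp C \<phi> q) = g"
      using restore[OF cat_comp[OF C \<psi> h(1)]] h(2) cat_comp[OF C \<psi> h(1)] by simp
  next
    fix k assume k: "k \<in> hom C r Y \<and> Cmp C k (Cmp C \<phi> q) = g"
    then have "Cmp C k \<phi> = h"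
      using cokernel_epi[OF C ck cat_comp[OF C \<phi>] h(1)] restore h(2) by simp
    then show "k = Cmp C h \<psi>"
      using cat_assoc[OF C \<psi> \<phi>] \<phi>\<psi> cat_idr[OF C] k by metis
  qed
qed

lemma cokernel_comp_iso:
  assumes C: "category C" and ck: "is_cokernel C f q"
    and \<phi>: "\<phi> \<in> hom C (Cod C q) r" and \<psi>: "\<psi> \<in> hom C r (Cod C q)"
    and \<psi>\<phi>: "Cmp C \<psi> \<phi> = Idm C (Cod C q)" and \<phi>\<psi>: "Cmp C \<phi> \<psi> = Idm C r"
  shows "is_cokernel C f (Cmp C \<phi> q)"
proof -
  have fA: "f \<in> Arr C" using ck unfolding is_cokernel_def by (elim conjE)
  note f = arr_in_hom[OF fA] and q = cokernel_hom[OF ck]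
  have u: "Cmp C \<phi> q \<in> hom C (Cod C f) r" using cat_comp[OF C q \<phi>] .
  have "is_zero_arr C (Cmp C \<phi> (Cmp C q f))"
    using zero_arr_comp_left[OF C cokernel_zero_comp[OF ck]] \<phi> homD[OF cat_comp[OF C f q]] by simp
  then have z: "is_zero_arr C (Cmp C (Cmp C \<phi> q) f)"
    using cat_assoc[OF C f q \<phi>] by simp
  show ?thesis
    unfolding is_cokernel_def
  proof (intro conjI ballI impI)
    fix g assume g: "g \<in> Arr C" "Dom C g = Cod C f \<and> is_zero_arr C (Cmp C g f)"
    then have "\<exists>!h. h \<in> hom C r (Cod C g) \<and> Cmp C h (Cmp C \<phi> q) = g"
      using cokernel_comp_iso_factor[OF assms, of g "Cod C g"] arr_in_hom[OF g(1)] by simp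
    then show "\<exists>!h. h \<in> hom C (Cod C (Cmp C \<phi> q)) (Cod C g) \<and> Cmp C h (Cmp C \<phi> q) = g"
      using homD[OF u] by simp
  qed (use fA homD[OF u] z in simp_all)
qed

text \<open>Identity and zero endomorphism of the codomain agree after the cokernel, hence agree.\<close>

lemma cokernel_zero_codomain:
  assumes C: "category C" and "pointed C" and ck: "is_cokernel C f q" and z: "is_zero_arr C q"
  shows "is_zero_obj C (Cod C q)"
proof -
  note q = cokernel_hom[OF ck]
  have r: "Cod C q \<in> Obj C" using cat_obj_cod[OF C q] .
  obtain e where e: "e \<in> hom C (Cod C q) (Cod C q)" "is_zero_arr C e"
    using zero_arr_exists[OF C \<open>pointed C\<close> r r] by blast
  have "is_zero_arr C (Cmp C e q)"
    using zero_arr_comp_right[OF C e(2)] q homD[OF e(1)] by simp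
  then have "Cmp C (Idm C (Cod C q)) q = Cmp C e q"
    using zero_arr_unique[OF C _ _ _ cat_comp[OF C q e(1)]] z cat_idl[OF C q] q by simp
  then have "Idm C (Cod C q) = e"
    using cokernel_epi[OF C ck cat_id[OF C r] e(1)] by simp
  then show ?thesis using zero_obj_if_id_zero[OF C r] e(2) by simp
qed

lemma reflection_unique_iso:
  assumes C: "category C" and r: "is_reflection C D c r u" and r': "is_reflection C D c r' u'"
  obtains \<phi> \<psi> where "\<phi> \<in> hom C r r'" "\<psi> \<in> hom C r' r"
    "Cmp C \<psi> \<phi> = Idm C r" "Cmp C \<phi> \<psi> = Idm C r'" "Cmp C \<phi> u = u'"
proof -
  have u: "u \<in> hom C c r" "r \<in> D" and u': "u' \<in> hom C c r'" "r' \<in> D"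
    using r r' unfolding is_reflection_def by simp_all
  have univ: "\<exists>!g. g \<in> hom C r d \<and> Cmp C g u = f" if "d \<in> D" "f \<in> hom C c d" for d f
    using r that unfolding is_reflection_def by simp
  have univ': "\<exists>!g. g \<in> hom C r' d \<and> Cmp C g u' = f" if "d \<in> D" "f \<in> hom C c d" for d f
    using r' that unfolding is_reflection_def by simp
  obtain \<phi> where \<phi>: "\<phi> \<in> hom C r r'" "Cmp C \<phi> u = u'" using univ[OF u'(2,1)] by blast
  obtain \<psi> where \<psi>: "\<psi> \<in> hom C r' r" "Cmp C \<psi> u' = u" using univ'[OF u(2,1)] by blast
  have "Cmp C (Cmp C \<psi> \<phi>) u = u" "Cmp C (Cmp C \<phi> \<psi>) u' = u'"
    using cat_assoc[OF C u(1) \<phi>(1) \<psi>(1)] cat_assoc[OF C u'(1) \<psi>(1) \<phi>(1)] \<phi> \<psi> by simp_all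
  moreover have "Cmp C (Idm C r) u = u" "Cmp C (Idm C r') u' = u'"
    using cat_idl[OF C u(1)] cat_idl[OF C u'(1)] .
  ultimately have "Cmp C \<psi> \<phi> = Idm C r" "Cmp C \<phi> \<psi> = Idm C r'"
    using ex1_unique[OF univ[OF u(2,1)], of "Cmp C \<psi> \<phi>" "Idm C r"]
      ex1_unique[OF univ'[OF u'(2,1)], of "Cmp C \<phi> \<psi>" "Idm C r'"]
      cat_comp[OF C \<phi>(1) \<psi>(1)] cat_comp[OF C \<psi>(1) \<phi>(1)]
      cat_id[OF C cat_obj_cod[OF C u(1)]] cat_id[OF C cat_obj_cod[OF C u'(1)]] by blast+
  with \<phi> \<psi> that show ?thesis by blast
qed

lemma normal_epi_reflection_unit:
  assumes C: "category C" and r: "is_reflection C D c r u" and r': "is_reflection C D c r' u'"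
    and "normal_epi C u"
  shows "normal_epi C u'"
proof -
  obtain f where ck: "is_cokernel C f u" using \<open>normal_epi C u\<close> unfolding normal_epi_def by blast
  have "Cod C u = r" using r unfolding is_reflection_def hom_def by simp
  obtain \<phi> \<psi> where "\<phi> \<in> hom C r r'" "\<psi> \<in> hom C r' r"
    "Cmp C \<psi> \<phi> = Idm C r" "Cmp C \<phi> \<psi> = Idm C r'" "Cmp C \<phi> u = u'"
    using reflection_unique_iso[OF C r r'] .
  then have "is_cokernel C f u'"
    using cokernel_comp_iso[OF C ck, of \<phi> r' \<psi>] \<open>Cod C u = r\<close> by simp
  then show ?thesis unfolding normal_epi_def by blast
qed

lemma cokernel_reflection:
  assumes ck: "is_cokernel C s u" and "Cod C u \<in> D"
    and kill: "\<And>d f. d \<in> D \<Longrightarrow> f \<in> hom C (Cod C s) d \<Longrightarrow> is_zero_arr C (Cmp C f s)"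
  shows "is_reflection C D (Cod C s) (Cod C u) u"
  unfolding is_reflection_def
  using \<open>Cod C u \<in> D\<close> cokernel_hom[OF ck] cokernel_factor[OF ck _ kill] by simp

lemma functor_obj: "is_functor T A F \<Longrightarrow> x \<in> Obj T \<Longrightarrow> fst F x \<in> Obj A"
  unfolding is_functor_def by blast

lemma functor_hom: "is_functor T A F \<Longrightarrow> f \<in> hom T x y \<Longrightarrow> snd F f \<in> hom A (fst F x) (fst F y)"
  unfolding is_functor_def hom_def by blast

lemma functor_id: "is_functor T A F \<Longrightarrow> x \<in> Obj T \<Longrightarrow> snd F (Idm T x) = Idm A (fst F x)"
  unfolding is_functor_def by blast

lemma functor_comp:
  "is_functor T A F \<Longrightarrow> f \<in> hom T x y \<Longrightarrow> g \<in> hom T y z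
   \<Longrightarrow> snd F (Cmp T g f) = Cmp A (snd F g) (snd F f)"
  unfolding is_functor_def hom_def by (elim conjE) simp

lemma functorI:
  assumes "\<And>x. x \<in> Obj T \<Longrightarrow> fst F x \<in> Obj A"
    and "\<And>f x y. f \<in> hom T x y \<Longrightarrow> snd F f \<in> hom A (fst F x) (fst F y)"
    and "\<And>x. x \<in> Obj T \<Longrightarrow> snd F (Idm T x) = Idm A (fst F x)"
    and "\<And>f g x y z. f \<in> hom T x y \<Longrightarrow> g \<in> hom T y z \<Longrightarrow>
           snd F (Cmp T g f) = Cmp A (snd F g) (snd F f)"
    and "\<And>x. x \<notin> Obj T \<Longrightarrow> fst F x = undefined"
    and "\<And>f. f \<notin> Arr T \<Longrightarrow> snd F f = undefined"
  shows "is_functor T A F"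
  unfolding is_functor_def
proof (intro conjI ballI allI impI)
  fix f assume "f \<in> Arr T"
  then show "snd F f \<in> hom A (fst F (Dom T f)) (fst F (Cod T f))"
    by (rule assms(2)[OF arr_in_hom])
next
  fix f g assume "f \<in> Arr T" "g \<in> Arr T" "Cod T f = Dom T g"
  then show "snd F (Cmp T g f) = Cmp A (snd F g) (snd F f)"
    using assms(4) arr_in_hom by metis
qed (use assms in auto)

lemma nat_trans_functors: "nat_trans T A F G \<eta> \<Longrightarrow> is_functor T A F \<and> is_functor T A G"
  unfolding nat_trans_def by blast

lemma nat_trans_hom: "nat_trans T A F G \<eta> \<Longrightarrow> x \<in> Obj T \<Longrightarrow> \<eta> x \<in> hom A (fst F x) (fst G x)"
  unfolding nat_trans_def by blast

lemma nat_trans_natural: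
  "nat_trans T A F G \<eta> \<Longrightarrow> f \<in> hom T x y \<Longrightarrow> Cmp A (\<eta> y) (snd F f) = Cmp A (snd G f) (\<eta> x)"
  unfolding nat_trans_def hom_def by blast

lemma nat_trans_undefined: "nat_trans T A F G \<eta> \<Longrightarrow> x \<notin> Obj T \<Longrightarrow> \<eta> x = undefined"
  unfolding nat_trans_def by blast

lemma nat_transI:
  assumes "is_functor T A F" "is_functor T A G"
    and "\<And>x. x \<in> Obj T \<Longrightarrow> \<eta> x \<in> hom A (fst F x) (fst G x)"
    and "\<And>f x y. f \<in> hom T x y \<Longrightarrow> Cmp A (\<eta> y) (snd F f) = Cmp A (snd G f) (\<eta> x)"
    and "\<And>x. x \<notin> Obj T \<Longrightarrow> \<eta> x = undefined"
  shows "nat_trans T A F G \<eta>"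
  unfolding nat_trans_def
proof (intro conjI ballI allI impI)
  fix f assume "f \<in> Arr T"
  then show "Cmp A (\<eta> (Cod T f)) (snd F f) = Cmp A (snd G f) (\<eta> (Dom T f))"
    using assms(4)[OF arr_in_hom[OF \<open>f \<in> Arr T\<close>]] by simp
qed (use assms in auto)

lemma nat_trans_eqI:
  assumes "nat_trans T A F G \<eta>" "nat_trans T A F' G' \<theta>" "\<And>x. x \<in> Obj T \<Longrightarrow> \<eta> x = \<theta> x"
  shows "\<eta> = \<theta>"
proof
  fix x show "\<eta> x = \<theta> x"
    using assms(3) nat_trans_undefined[OF assms(1)] nat_trans_undefined[OF assms(2)]
    by (cases "x \<in> Obj T") simp_all
qed

section \<open>The functor category\<close>

lemma funcat_simps [simp]:
  "Obj (funcat A T) = {F. is_functor T A F}"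
  "Arr (funcat A T) = {(F, G, \<eta>). nat_trans T A F G \<eta>}"
  "Dom (funcat A T) (F, G, \<eta>) = F"
  "Cod (funcat A T) (F, G, \<eta>) = G"
  "Idm (funcat A T) F = (F, F, \<lambda>x \<in> Obj T. Idm A (fst F x))"
  "Cmp (funcat A T) (G', H, \<theta>) (F, G, \<eta>) = (F, H, \<lambda>x \<in> Obj T. Cmp A (\<theta> x) (\<eta> x))"
  by (simp_all add: funcat_def)

lemma funcat_hom_iff: "a \<in> hom (funcat A T) F G \<longleftrightarrow> (\<exists>\<eta>. a = (F, G, \<eta>) \<and> nat_trans T A F G \<eta>)"
  unfolding hom_def by (cases a) auto

lemma funcat_homI: "nat_trans T A F G \<eta> \<Longrightarrow> (F, G, \<eta>) \<in> hom (funcat A T) F G"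
  using funcat_hom_iff by blast

lemma funcat_homE:
  assumes "a \<in> hom (funcat A T) F G"
  obtains \<eta> where "a = (F, G, \<eta>)" "nat_trans T A F G \<eta>"
  using assms funcat_hom_iff by blast

lemma nat_trans_id:
  assumes A: "category A" and T: "category T" and F: "is_functor T A F"
  shows "nat_trans T A F F (\<lambda>x \<in> Obj T. Idm A (fst F x))"
proof (rule nat_transI[OF F F])
  fix f x y assume f: "f \<in> hom T x y"
  then show "Cmp A ((\<lambda>x \<in> Obj T. Idm A (fst F x)) y) (snd F f) =
      Cmp A (snd F f) ((\<lambda>x \<in> Obj T. Idm A (fst F x)) x)"
    using cat_obj_dom[OF T f] cat_obj_cod[OF T f]
      cat_idl[OF A functor_hom[OF F f]] cat_idr[OF A functor_hom[OF F f]] by simp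
qed (use cat_id[OF A functor_obj[OF F]] in simp_all)

lemma nat_trans_vcomp:
  assumes A: "category A" and T: "category T"
    and \<eta>: "nat_trans T A F G \<eta>" and \<theta>: "nat_trans T A G H \<theta>"
  shows "nat_trans T A F H (\<lambda>x \<in> Obj T. Cmp A (\<theta> x) (\<eta> x))"
proof (rule nat_transI)
  show "is_functor T A F" "is_functor T A H"
    using nat_trans_functors[OF \<eta>] nat_trans_functors[OF \<theta>] by auto
next
  fix f x y assume f: "f \<in> hom T x y"
  have x: "x \<in> Obj T" and y: "y \<in> Obj T" using cat_obj_dom[OF T f] cat_obj_cod[OF T f] .
  have F: "is_functor T A F" and G: "is_functor T A G" and H: "is_functor T A H"
    using nat_trans_functors[OF \<eta>] nat_trans_functors[OF \<theta>] by auto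
  note \<eta>x = nat_trans_hom[OF \<eta> x] and \<eta>y = nat_trans_hom[OF \<eta> y]
    and \<theta>x = nat_trans_hom[OF \<theta> x] and \<theta>y = nat_trans_hom[OF \<theta> y]
  have "Cmp A (Cmp A (\<theta> y) (\<eta> y)) (snd F f) = Cmp A (\<theta> y) (Cmp A (\<eta> y) (snd F f))"
    using cat_assoc[OF A functor_hom[OF F f] \<eta>y \<theta>y] by simp
  also have "\<dots> = Cmp A (Cmp A (\<theta> y) (snd G f)) (\<eta> x)"
    using nat_trans_natural[OF \<eta> f] cat_assoc[OF A \<eta>x functor_hom[OF G f] \<theta>y] by simp
  also have "\<dots> = Cmp A (snd H f) (Cmp A (\<theta> x) (\<eta> x))"
    using nat_trans_natural[OF \<theta> f] cat_assoc[OF A \<eta>x \<theta>x functor_hom[OF H f]] by simp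
  finally show "Cmp A ((\<lambda>x \<in> Obj T. Cmp A (\<theta> x) (\<eta> x)) y) (snd F f) =
      Cmp A (snd H f) ((\<lambda>x \<in> Obj T. Cmp A (\<theta> x) (\<eta> x)) x)"
    using x y by simp
qed (use cat_comp[OF A nat_trans_hom[OF \<eta>] nat_trans_hom[OF \<theta>]] in simp_all)

lemma funcat_category:
  assumes A: "category A" and T: "category T"
  shows "category (funcat A T)"
proof (rule categoryI)
  fix f assume "f \<in> Arr (funcat A T)"
  then show "Dom (funcat A T) f \<in> Obj (funcat A T) \<and> Cod (funcat A T) f \<in> Obj (funcat A T)"
    using nat_trans_functors by fastforce
next
  fix F assume "F \<in> Obj (funcat A T)"
  then show "Idm (funcat A T) F \<in> hom (funcat A T) F F"
    using funcat_homI[OF nat_trans_id[OF A T]] by simp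
next
  fix f g F G H assume "f \<in> hom (funcat A T) F G" "g \<in> hom (funcat A T) G H"
  then show "Cmp (funcat A T) g f \<in> hom (funcat A T) F H"
    by (auto elim!: funcat_homE intro!: funcat_homI nat_trans_vcomp[OF A T])
next
  fix f F G assume "f \<in> hom (funcat A T) F G"
  then obtain \<eta> where f: "f = (F, G, \<eta>)" "nat_trans T A F G \<eta>" by (rule funcat_homE)
  have "(\<lambda>x \<in> Obj T. Cmp A (Idm A (fst G x)) (\<eta> x)) = \<eta>"
    "(\<lambda>x \<in> Obj T. Cmp A (\<eta> x) (Idm A (fst F x))) = \<eta>"
    using cat_idl[OF A nat_trans_hom[OF f(2)]] cat_idr[OF A nat_trans_hom[OF f(2)]]
      nat_trans_undefined[OF f(2)] by (auto intro!: ext)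
  then show "Cmp (funcat A T) (Idm (funcat A T) G) f = f \<and>
      Cmp (funcat A T) f (Idm (funcat A T) F) = f"
    using f(1) by (simp add: restrict_def cong: if_cong)
next
  fix f g h F G H K
  assume "f \<in> hom (funcat A T) F G" "g \<in> hom (funcat A T) G H" "h \<in> hom (funcat A T) H K"
  then obtain \<eta> \<theta> \<kappa> where fgh: "f = (F, G, \<eta>)" "g = (G, H, \<theta>)" "h = (H, K, \<kappa>)"
    "nat_trans T A F G \<eta>" "nat_trans T A G H \<theta>" "nat_trans T A H K \<kappa>"
    by (metis funcat_homE)
  have "(\<lambda>x \<in> Obj T. Cmp A (\<kappa> x) (Cmp A (\<theta> x) (\<eta> x))) =
        (\<lambda>x \<in> Obj T. Cmp A (Cmp A (\<kappa> x) (\<theta> x)) (\<eta> x))"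
    using cat_assoc[OF A nat_trans_hom[OF fgh(4)] nat_trans_hom[OF fgh(5)] nat_trans_hom[OF fgh(6)]]
    by (intro restrict_ext) simp
  then show "Cmp (funcat A T) h (Cmp (funcat A T) g f) = Cmp (funcat A T) (Cmp (funcat A T) h g) f"
    using fgh(1-3) by (simp cong: restrict_cong)
qed

text \<open>Uniqueness is required for all pairs of components, so that naturality squares commute.\<close>

lemma funcat_hom_ex1:
  assumes A: "category A" and T: "category T" and F: "is_functor T A F" and G: "is_functor T A G"
    and uniq: "\<And>x y. x \<in> Obj T \<Longrightarrow> y \<in> Obj T \<Longrightarrow> \<exists>!f. f \<in> hom A (fst F x) (fst G y)"
  shows "\<exists>!a. a \<in> hom (funcat A T) F G"
proof -
  define \<eta> where "\<eta> = (\<lambda>x \<in> Obj T. THE f. f \<in> hom A (fst F x) (fst G x))"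
  have \<eta>x: "\<eta> x \<in> hom A (fst F x) (fst G x)" if "x \<in> Obj T" for x
    using theI'[OF uniq[OF that that]] that by (simp add: \<eta>_def)
  have \<eta>: "nat_trans T A F G \<eta>"
  proof (rule nat_transI[OF F G \<eta>x])
    fix f x y assume f: "f \<in> hom T x y"
    note x = cat_obj_dom[OF T f] and y = cat_obj_cod[OF T f]
    show "Cmp A (\<eta> y) (snd F f) = Cmp A (snd G f) (\<eta> x)"
      using ex1_unique[OF uniq[OF x y]] cat_comp[OF A functor_hom[OF F f] \<eta>x[OF y]]
        cat_comp[OF A \<eta>x[OF x] functor_hom[OF G f]] by blast
  next
    show "\<And>x. x \<notin> Obj T \<Longrightarrow> \<eta> x = undefined" by (simp add: \<eta>_def)
  qed
  have "a = (F, G, \<eta>)" if ha: "a \<in> hom (funcat A T) F G" for a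
  proof -
    obtain \<eta>' where a: "a = (F, G, \<eta>')" "nat_trans T A F G \<eta>'"
      using ha by (rule funcat_homE)
    have "\<eta>' = \<eta>"
      using nat_trans_eqI[OF a(2) \<eta>] ex1_unique[OF uniq] nat_trans_hom[OF a(2)] \<eta>x by blast
    with a(1) show ?thesis by simp
  qed
  with funcat_homI[OF \<eta>] show ?thesis by blast
qed

definition const_functor :: "('to,'tm) cat \<Rightarrow> ('ao,'am) cat \<Rightarrow> 'ao \<Rightarrow> ('to,'tm,'ao,'am) ftor" where
  "const_functor T A z = ((\<lambda>x \<in> Obj T. z), (\<lambda>f \<in> Arr T. Idm A z))"

lemma const_functor_is_functor:
  assumes A: "category A" and T: "category T" and z: "z \<in> Obj A"
  shows "is_functor T A (const_functor T A z)"
proof (rule functorI)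
  fix f g x y w assume "f \<in> hom T x y" "g \<in> hom T y w"
  then show "snd (const_functor T A z) (Cmp T g f) =
      Cmp A (snd (const_functor T A z) g) (snd (const_functor T A z) f)"
    using homD[OF cat_comp[OF T \<open>f \<in> hom T x y\<close> \<open>g \<in> hom T y w\<close>]]
      homD[OF \<open>f \<in> hom T x y\<close>] homD[OF \<open>g \<in> hom T y w\<close>] cat_idl[OF A cat_id[OF A z]]
    by (simp add: const_functor_def)
next
  fix f x y assume f: "f \<in> hom T x y"
  then show "snd (const_functor T A z) f \<in>
      hom A (fst (const_functor T A z) x) (fst (const_functor T A z) y)"
    using homD[OF f] cat_obj_dom[OF T f] cat_obj_cod[OF T f] cat_id[OF A z]
    by (simp add: const_functor_def)
next
  fix x assume "x \<in> Obj T"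
  then show "snd (const_functor T A z) (Idm T x) = Idm A (fst (const_functor T A z) x)"
    using homD[OF cat_id[OF T]] by (simp add: const_functor_def)
qed (use z in \<open>simp_all add: const_functor_def\<close>)

lemma funcat_zero_obj:
  assumes A: "category A" and T: "category T" and z: "is_zero_obj A z"
  shows "is_zero_obj (funcat A T) (const_functor T A z)"
proof -
  let ?Z = "const_functor T A z"
  have Z: "is_functor T A ?Z" using const_functor_is_functor[OF A T zero_obj_in_Obj[OF z]] .
  have "fst ?Z x = z" if "x \<in> Obj T" for x using that by (simp add: const_functor_def)
  then have "\<exists>!a. a \<in> hom (funcat A T) ?Z G" "\<exists>!a. a \<in> hom (funcat A T) G ?Z"
    if "is_functor T A G" for G
    using funcat_hom_ex1[OF A T Z that] funcat_hom_ex1[OF A T that Z]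
      zero_obj_arr_from[OF z] zero_obj_arr_to[OF z] functor_obj[OF that] by simp_all
  with Z show ?thesis unfolding is_zero_obj_def is_initial_def is_terminal_def by simp
qed

lemma funcat_zero_arr_iff:
  assumes A: "category A" and T: "category T" and "pointed A" and \<eta>: "nat_trans T A F G \<eta>"
  shows "is_zero_arr (funcat A T) (F, G, \<eta>) \<longleftrightarrow> (\<forall>x \<in> Obj T. is_zero_arr A (\<eta> x))"
proof -
  obtain z where z: "is_zero_obj A z" using \<open>pointed A\<close> unfolding pointed_def by blast
  let ?Z = "const_functor T A z"
  have FC: "category (funcat A T)" using funcat_category[OF A T] .
  have Zz: "is_zero_obj (funcat A T) ?Z" using funcat_zero_obj[OF A T z] .
  have F: "is_functor T A F" and G: "is_functor T A G" using nat_trans_functors[OF \<eta>] by auto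
  have "F \<in> Obj (funcat A T)" "G \<in> Obj (funcat A T)" using F G by simp_all
  then obtain a b where "a \<in> hom (funcat A T) F ?Z" "b \<in> hom (funcat A T) ?Z G"
    using zero_obj_arr_to[OF Zz] zero_obj_arr_from[OF Zz] by (meson ex1_implies_ex)
  then obtain \<alpha> \<beta> where \<alpha>: "nat_trans T A F ?Z \<alpha>" and \<beta>: "nat_trans T A ?Z G \<beta>"
    by (metis funcat_homE)
  define \<zeta> where "\<zeta> = (\<lambda>x \<in> Obj T. Cmp A (\<beta> x) (\<alpha> x))"
  have \<zeta>: "nat_trans T A F G \<zeta>" using nat_trans_vcomp[OF A T \<alpha> \<beta>] unfolding \<zeta>_def .
  have "is_zero_arr (funcat A T) (Cmp (funcat A T) (?Z, G, \<beta>) (F, ?Z, \<alpha>))"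
    using zero_arr_through_zero_obj[OF FC Zz funcat_homI[OF \<alpha>] funcat_homI[OF \<beta>]] .
  then have \<zeta>_zero: "is_zero_arr (funcat A T) (F, G, \<zeta>)" by (simp add: \<zeta>_def)
  have \<zeta>x_zero: "is_zero_arr A (\<zeta> x)" if x: "x \<in> Obj T" for x
    using zero_arr_through_zero_obj[OF A z] nat_trans_hom[OF \<alpha> x] nat_trans_hom[OF \<beta> x] x
    by (simp add: \<zeta>_def const_functor_def)
  show ?thesis
  proof
    assume "is_zero_arr (funcat A T) (F, G, \<eta>)"
    then have "\<eta> = \<zeta>"
      using zero_arr_unique[OF FC _ funcat_homI[OF \<eta>] \<zeta>_zero funcat_homI[OF \<zeta>]] by simp
    with \<zeta>x_zero show "\<forall>x \<in> Obj T. is_zero_arr A (\<eta> x)" by blast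
  next
    assume "\<forall>x \<in> Obj T. is_zero_arr A (\<eta> x)"
    then have "\<eta> = \<zeta>"
      using nat_trans_eqI[OF \<eta> \<zeta>] zero_arr_unique[OF A] nat_trans_hom[OF \<eta>] nat_trans_hom[OF \<zeta>]
        \<zeta>x_zero by blast
    with \<zeta>_zero show "is_zero_arr (funcat A T) (F, G, \<eta>)" by simp
  qed
qed

definition induced_functor ::
  "('to,'tm) cat \<Rightarrow> ('ao,'am) cat \<Rightarrow> ('to \<Rightarrow> 'ao) \<Rightarrow> ('tm \<Rightarrow> 'am \<Rightarrow> bool) \<Rightarrow> ('to,'tm,'ao,'am) ftor"
where
  "induced_functor T A R \<Phi> =
     ((\<lambda>x \<in> Obj T. R x), (\<lambda>f \<in> Arr T. THE h. h \<in> hom A (R (Dom T f)) (R (Cod T f)) \<and> \<Phi> f h))"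

lemma induced_functor_obj: "x \<in> Obj T \<Longrightarrow> fst (induced_functor T A R \<Phi>) x = R x"
  by (simp add: induced_functor_def)

lemma induced_functor_arr:
  assumes "f \<in> hom T x y" and "\<exists>!h. h \<in> hom A (R x) (R y) \<and> \<Phi> f h"
  shows "snd (induced_functor T A R \<Phi>) f \<in> hom A (R x) (R y) \<and>
    \<Phi> f (snd (induced_functor T A R \<Phi>) f)"
  using theI'[OF assms(2)] homD[OF assms(1)] by (simp add: induced_functor_def)

lemma induced_functor_is_functor:
  assumes A: "category A" and T: "category T" and R: "\<And>x. x \<in> Obj T \<Longrightarrow> R x \<in> Obj A"
    and uniq: "\<And>f x y. f \<in> hom T x y \<Longrightarrow> \<exists>!h. h \<in> hom A (R x) (R y) \<and> \<Phi> f h"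
    and id: "\<And>x. x \<in> Obj T \<Longrightarrow> \<Phi> (Idm T x) (Idm A (R x))"
    and comp: "\<And>f g h k x y z. f \<in> hom T x y \<Longrightarrow> g \<in> hom T y z \<Longrightarrow>
        h \<in> hom A (R x) (R y) \<Longrightarrow> \<Phi> f h \<Longrightarrow> k \<in> hom A (R y) (R z) \<Longrightarrow> \<Phi> g k \<Longrightarrow>
        \<Phi> (Cmp T g f) (Cmp A k h)"
  shows "is_functor T A (induced_functor T A R \<Phi>)"
proof -
  let ?G = "induced_functor T A R \<Phi>"
  have arr: "snd ?G f \<in> hom A (R x) (R y) \<and> \<Phi> f (snd ?G f)" if "f \<in> hom T x y" for f x y
    using induced_functor_arr[where R = R and \<Phi> = \<Phi>, OF that uniq[OF that]] .
  show ?thesis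
  proof (rule functorI)
    fix f x y assume f: "f \<in> hom T x y"
    then show "snd ?G f \<in> hom A (fst ?G x) (fst ?G y)"
      using arr[OF f] cat_obj_dom[OF T f] cat_obj_cod[OF T f] by (simp add: induced_functor_obj)
  next
    fix x assume x: "x \<in> Obj T"
    note idx = cat_id[OF T x]
    show "snd ?G (Idm T x) = Idm A (fst ?G x)"
      using ex1_unique[OF uniq[OF idx]] arr[OF idx] cat_id[OF A R[OF x]] id[OF x] x
      by (simp add: induced_functor_obj)
  next
    fix f g x y z assume f: "f \<in> hom T x y" and g: "g \<in> hom T y z"
    note gf = cat_comp[OF T f g] and hf = arr[OF f] and hg = arr[OF g]
    show "snd ?G (Cmp T g f) = Cmp A (snd ?G g) (snd ?G f)"
      using ex1_unique[OF uniq[OF gf]] arr[OF gf] cat_comp[OF A conjunct1[OF hf] conjunct1[OF hg]]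
        comp[OF f g conjunct1[OF hf] conjunct2[OF hf] conjunct1[OF hg] conjunct2[OF hg]] by blast
  qed (use R in \<open>simp_all add: induced_functor_def\<close>)
qed

section \<open>Cokernels in functor categories\<close>

locale pointwise_cokernel =
  fixes A :: "('ao,'am) cat" and T :: "('to,'tm) cat"
    and P F :: "('to,'tm,'ao,'am) ftor" and \<sigma> q :: "'to \<Rightarrow> 'am"
  assumes A: "category A" and pointed: "pointed A" and T: "category T"
    and \<sigma>: "nat_trans T A P F \<sigma>"
    and cokernel: "\<And>x. x \<in> Obj T \<Longrightarrow> is_cokernel A (\<sigma> x) (q x)"
begin

definition R :: "('to,'tm,'ao,'am) ftor" where
  "R = induced_functor T A (\<lambda>x. Cod A (q x))
         (\<lambda>f h. Cmp A h (q (Dom T f)) = Cmp A (q (Cod T f)) (snd F f))"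

abbreviation unit :: "('to,'tm,'ao,'am) ftor \<times> ('to,'tm,'ao,'am) ftor \<times> ('to \<Rightarrow> 'am)" where
  "unit \<equiv> (F, R, \<lambda>x \<in> Obj T. q x)"

lemma F: "is_functor T A F" and P: "is_functor T A P"
  using nat_trans_functors[OF \<sigma>] by auto

lemma q_hom: "x \<in> Obj T \<Longrightarrow> q x \<in> hom A (fst F x) (Cod A (q x))"
  using cokernel_hom[OF cokernel] homD[OF nat_trans_hom[OF \<sigma>]] by metis

lemma R_obj: "x \<in> Obj T \<Longrightarrow> fst R x = Cod A (q x)"
  unfolding R_def by (rule induced_functor_obj)

lemma q_epi:
  "x \<in> Obj T \<Longrightarrow> h \<in> hom A (Cod A (q x)) Y \<Longrightarrow> h' \<in> hom A (Cod A (q x)) Y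
   \<Longrightarrow> Cmp A h (q x) = Cmp A h' (q x) \<Longrightarrow> h = h'"
  using cokernel_epi[OF A cokernel] by blast

text \<open>q y \<circ> F f annihilates \<sigma> x, being equal to q y \<circ> \<sigma> y \<circ> P f by naturality.\<close>

lemma R_arr_ex1:
  assumes f: "f \<in> hom T x y"
  shows "\<exists>!h. h \<in> hom A (Cod A (q x)) (Cod A (q y)) \<and> Cmp A h (q x) = Cmp A (q y) (snd F f)"
proof -
  note x = cat_obj_dom[OF T f] and y = cat_obj_cod[OF T f]
  note \<sigma>x = nat_trans_hom[OF \<sigma> x] and \<sigma>y = nat_trans_hom[OF \<sigma> y]
  have g: "Cmp A (q y) (snd F f) \<in> hom A (fst F x) (Cod A (q y))"
    using cat_comp[OF A functor_hom[OF F f] q_hom[OF y]] .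
  have "Cmp A (Cmp A (q y) (snd F f)) (\<sigma> x) = Cmp A (Cmp A (q y) (\<sigma> y)) (snd P f)"
    using cat_assoc[OF A \<sigma>x functor_hom[OF F f] q_hom[OF y]] nat_trans_natural[OF \<sigma> f]
      cat_assoc[OF A functor_hom[OF P f] \<sigma>y q_hom[OF y]] by simp
  moreover have "is_zero_arr A (Cmp A (Cmp A (q y) (\<sigma> y)) (snd P f))"
    using zero_arr_comp_right[OF A cokernel_zero_comp[OF cokernel[OF y]]] functor_hom[OF P f]
      homD[OF cat_comp[OF A \<sigma>y q_hom[OF y]]] by simp
  ultimately show ?thesis
    using cokernel_factor[OF cokernel[OF x]] g homD[OF \<sigma>x] by simp
qed

lemma R_arr:
  assumes f: "f \<in> hom T x y"
  shows "snd R f \<in> hom A (Cod A (q x)) (Cod A (q y)) \<and>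
    Cmp A (snd R f) (q x) = Cmp A (q y) (snd F f)"
proof -
  have "\<exists>!h. h \<in> hom A (Cod A (q x)) (Cod A (q y)) \<and>
      Cmp A h (q (Dom T f)) = Cmp A (q (Cod T f)) (snd F f)"
    using R_arr_ex1[OF f] homD[OF f] by simp
  from induced_functor_arr[where R = "\<lambda>x. Cod A (q x)"
      and \<Phi> = "\<lambda>f h. Cmp A h (q (Dom T f)) = Cmp A (q (Cod T f)) (snd F f)", OF f this]
  show ?thesis
    using homD[OF f] unfolding R_def by simp
qed

lemma R_functor: "is_functor T A R"
  unfolding R_def
proof (rule induced_functor_is_functor[OF A T])
  fix x assume x: "x \<in> Obj T"
  show "Cod A (q x) \<in> Obj A" using cat_obj_cod[OF A q_hom[OF x]] .
  show "Cmp A (Idm A (Cod A (q x))) (q (Dom T (Idm T x))) =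
      Cmp A (q (Cod T (Idm T x))) (snd F (Idm T x))"
    using homD[OF cat_id[OF T x]] cat_idl[OF A q_hom[OF x]] cat_idr[OF A q_hom[OF x]]
      functor_id[OF F x]
    by simp
next
  fix f x y assume f: "f \<in> hom T x y"
  then show "\<exists>!h. h \<in> hom A (Cod A (q x)) (Cod A (q y)) \<and>
      Cmp A h (q (Dom T f)) = Cmp A (q (Cod T f)) (snd F f)"
    using R_arr_ex1[OF f] homD[OF f] by simp
next
  fix f g h k x y z
  assume f: "f \<in> hom T x y" and g: "g \<in> hom T y z"
    and h: "h \<in> hom A (Cod A (q x)) (Cod A (q y))"
      "Cmp A h (q (Dom T f)) = Cmp A (q (Cod T f)) (snd F f)"
    and k: "k \<in> hom A (Cod A (q y)) (Cod A (q z))"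
      "Cmp A k (q (Dom T g)) = Cmp A (q (Cod T g)) (snd F g)"
  note x = cat_obj_dom[OF T f] and y = cat_obj_cod[OF T f] and z = cat_obj_cod[OF T g]
  have "Cmp A (Cmp A k h) (q x) = Cmp A k (Cmp A (q y) (snd F f))"
    using cat_assoc[OF A q_hom[OF x] h(1) k(1)] h(2) homD[OF f] by simp
  also have "\<dots> = Cmp A (Cmp A (q z) (snd F g)) (snd F f)"
    using cat_assoc[OF A functor_hom[OF F f] q_hom[OF y] k(1)] k(2) homD[OF g] by simp
  also have "\<dots> = Cmp A (q z) (snd F (Cmp T g f))"
    using cat_assoc[OF A functor_hom[OF F f] functor_hom[OF F g] q_hom[OF z]]
      functor_comp[OF F f g] by simp
  finally show "Cmp A (Cmp A k h) (q (Dom T (Cmp T g f))) =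
      Cmp A (q (Cod T (Cmp T g f))) (snd F (Cmp T g f))"
    using homD[OF cat_comp[OF T f g]] by simp
qed

lemma unit_nat_trans: "nat_trans T A F R (\<lambda>x \<in> Obj T. q x)"
proof (rule nat_transI[OF F R_functor])
  fix f x y assume f: "f \<in> hom T x y"
  then show "Cmp A ((\<lambda>x \<in> Obj T. q x) y) (snd F f) = Cmp A (snd R f) ((\<lambda>x \<in> Obj T. q x) x)"
    using R_arr[OF f] cat_obj_dom[OF T f] cat_obj_cod[OF T f] by simp
qed (use q_hom R_obj in simp_all)

text \<open>Naturality transfers from \<theta> to \<psi> because each q x is epi.\<close>

lemma nat_trans_through_unit:
  assumes \<theta>: "nat_trans T A F G \<theta>"
    and \<psi>: "\<And>x. x \<in> Obj T \<Longrightarrow> \<psi> x \<in> hom A (Cod A (q x)) (fst G x) \<and> Cmp A (\<psi> x) (q x) = \<theta> x"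
    and \<psi>_undefined: "\<And>x. x \<notin> Obj T \<Longrightarrow> \<psi> x = undefined"
  shows "nat_trans T A R G \<psi>"
proof (rule nat_transI[OF R_functor conjunct2[OF nat_trans_functors[OF \<theta>]]])
  have G: "is_functor T A G" using nat_trans_functors[OF \<theta>] by blast
  fix f x y assume f: "f \<in> hom T x y"
  note x = cat_obj_dom[OF T f] and y = cat_obj_cod[OF T f]
  note Rf = R_arr[OF f] and \<psi>x = \<psi>[OF x] and \<psi>y = \<psi>[OF y]
  have "Cmp A (Cmp A (\<psi> y) (snd R f)) (q x) = Cmp A (Cmp A (\<psi> y) (q y)) (snd F f)"
    using cat_assoc[OF A q_hom[OF x] conjunct1[OF Rf] conjunct1[OF \<psi>y]] conjunct2[OF Rf]
      cat_assoc[OF A functor_hom[OF F f] q_hom[OF y] conjunct1[OF \<psi>y]] by simp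
  also have "\<dots> = Cmp A (snd G f) (\<theta> x)"
    using \<psi>y nat_trans_natural[OF \<theta> f] by simp
  also have "\<dots> = Cmp A (Cmp A (snd G f) (\<psi> x)) (q x)"
    using \<psi>x cat_assoc[OF A q_hom[OF x] conjunct1[OF \<psi>x] functor_hom[OF G f]] by simp
  finally show "Cmp A (\<psi> y) (snd R f) = Cmp A (snd G f) (\<psi> x)"
    using q_epi[OF x cat_comp[OF A conjunct1[OF Rf] conjunct1[OF \<psi>y]]
        cat_comp[OF A conjunct1[OF \<psi>x] functor_hom[OF G f]]] by simp
qed (use \<psi> R_obj \<psi>_undefined in simp_all)

lemma unit_factor:
  assumes \<theta>: "nat_trans T A F G \<theta>" and zero: "\<And>x. x \<in> Obj T \<Longrightarrow> is_zero_arr A (Cmp A (\<theta> x) (\<sigma> x))"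
  shows "\<exists>!a. a \<in> hom (funcat A T) R G \<and> Cmp (funcat A T) a unit = (F, G, \<theta>)"
proof -
  have ex1: "\<exists>!h. h \<in> hom A (Cod A (q x)) (fst G x) \<and> Cmp A h (q x) = \<theta> x" if x: "x \<in> Obj T" for x
    using cokernel_factor[OF cokernel[OF x] _ zero[OF x]] nat_trans_hom[OF \<theta> x]
      homD[OF nat_trans_hom[OF \<sigma> x]] by simp
  define \<psi> where "\<psi> = (\<lambda>x \<in> Obj T. THE h. h \<in> hom A (Cod A (q x)) (fst G x) \<and> Cmp A h (q x) = \<theta> x)"
  have \<psi>x: "\<psi> x \<in> hom A (Cod A (q x)) (fst G x) \<and> Cmp A (\<psi> x) (q x) = \<theta> x" if x: "x \<in> Obj T" for x
    using theI'[OF ex1[OF x]] x by (simp add: \<psi>_def)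
  have \<psi>: "nat_trans T A R G \<psi>"
  proof (rule nat_trans_through_unit[OF \<theta> \<psi>x])
    show "\<psi> x = undefined" if "x \<notin> Obj T" for x using that by (simp add: \<psi>_def)
  qed
  have comp: "Cmp (funcat A T) (R, G, \<psi>') unit = (F, G, \<lambda>x \<in> Obj T. Cmp A (\<psi>' x) (q x))" for \<psi>'
    by (simp cong: restrict_cong)
  show ?thesis
  proof (rule ex1I[of _ "(R, G, \<psi>)"])
    have "(\<lambda>x \<in> Obj T. Cmp A (\<psi> x) (q x)) = \<theta>"
      using \<psi>x nat_trans_undefined[OF \<theta>] by (auto intro!: ext)
    then show "(R, G, \<psi>) \<in> hom (funcat A T) R G \<and> Cmp (funcat A T) (R, G, \<psi>) unit = (F, G, \<theta>)"
      using funcat_homI[OF \<psi>] comp by simp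
  next
    fix a assume a: "a \<in> hom (funcat A T) R G \<and> Cmp (funcat A T) a unit = (F, G, \<theta>)"
    then obtain \<psi>' where a': "a = (R, G, \<psi>')" "nat_trans T A R G \<psi>'"
      by (blast elim: funcat_homE)
    have "\<psi>' x = \<psi> x" if x: "x \<in> Obj T" for x
    proof -
      have "Cmp A (\<psi>' x) (q x) = \<theta> x"
        using a a'(1) comp fun_cong[of _ \<theta> x] x by fastforce
      then show ?thesis
        using q_epi[OF x _ conjunct1[OF \<psi>x[OF x]]] nat_trans_hom[OF a'(2) x] R_obj[OF x] \<psi>x[OF x]
        by simp
    qed
    then show "a = (R, G, \<psi>)" using nat_trans_eqI[OF a'(2) \<psi>] a'(1) by simp
  qed
qed

lemma funcat_cokernel: "is_cokernel (funcat A T) (P, F, \<sigma>) unit"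
  unfolding is_cokernel_def
proof (intro conjI ballI impI)
  have "nat_trans T A P R (\<lambda>x \<in> Obj T. Cmp A (q x) (\<sigma> x))"
    using nat_trans_vcomp[OF A T \<sigma> unit_nat_trans] by (simp cong: restrict_cong)
  moreover have "Cmp (funcat A T) unit (P, F, \<sigma>) = (P, R, \<lambda>x \<in> Obj T. Cmp A (q x) (\<sigma> x))"
    by (simp cong: restrict_cong)
  ultimately show "is_zero_arr (funcat A T) (Cmp (funcat A T) unit (P, F, \<sigma>))"
    using funcat_zero_arr_iff[OF A T pointed] cokernel_zero_comp[OF cokernel] by simp
next
  fix g assume "g \<in> Arr (funcat A T)"
    and g: "Dom (funcat A T) g = Cod (funcat A T) (P, F, \<sigma>) \<and>
      is_zero_arr (funcat A T) (Cmp (funcat A T) g (P, F, \<sigma>))"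
  then obtain G \<theta> where g': "g = (F, G, \<theta>)" "nat_trans T A F G \<theta>" by auto
  have "nat_trans T A P G (\<lambda>x \<in> Obj T. Cmp A (\<theta> x) (\<sigma> x))"
    using nat_trans_vcomp[OF A T \<sigma> g'(2)] .
  moreover have "Cmp (funcat A T) g (P, F, \<sigma>) = (P, G, \<lambda>x \<in> Obj T. Cmp A (\<theta> x) (\<sigma> x))"
    using g'(1) by simp
  ultimately have "\<forall>x \<in> Obj T. is_zero_arr A (Cmp A (\<theta> x) (\<sigma> x))"
    using funcat_zero_arr_iff[OF A T pointed] g by simp
  then show "\<exists>!h. h \<in> hom (funcat A T) (Cod (funcat A T) unit) (Cod (funcat A T) g) \<and>
      Cmp (funcat A T) h unit = g"
    using unit_factor[OF g'(2)] g'(1) by simp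
qed (use \<sigma> unit_nat_trans in simp_all)

end

section \<open>The reflection onto functors vanishing outside S\<close>

text \<open>\<sigma> x is the paper's [F(t)] over t \<in> [x], out of the coproduct P x with injections \<iota> x.\<close>

locale bracket_copairing =
  fixes A :: "('ao,'am) cat" and T :: "('to,'tm) cat" and S :: "'to set"
    and F :: "('to,'tm,'ao,'am) ftor"
    and P :: "'to \<Rightarrow> 'ao" and \<iota> :: "'to \<Rightarrow> 'tm \<Rightarrow> 'am" and \<sigma> :: "'to \<Rightarrow> 'am"
  assumes A: "category A" and pointed: "pointed A" and T: "category T" and F: "is_functor T A F"
    and coproduct: "\<And>x. x \<in> Obj T \<Longrightarrow>
      is_coproduct A (bracket T S x) (\<lambda>t. fst F (Dom T t)) (P x) (\<iota> x)"
    and \<sigma>_hom: "\<And>x. x \<in> Obj T \<Longrightarrow> \<sigma> x \<in> hom A (P x) (fst F x)"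
    and \<sigma>_\<iota>: "\<And>x t. x \<in> Obj T \<Longrightarrow> t \<in> bracket T S x \<Longrightarrow> Cmp A (\<sigma> x) (\<iota> x t) = snd F t"
begin

lemma bracket_hom: "t \<in> bracket T S x \<Longrightarrow> t \<in> hom T (Dom T t) x \<and> Dom T t \<notin> S"
  unfolding bracket_def hom_def by blast

lemma bracket_comp:
  assumes f: "f \<in> hom T x y" and t: "t \<in> bracket T S x"
  shows "Cmp T f t \<in> bracket T S y \<and> Dom T (Cmp T f t) = Dom T t"
  using homD[OF cat_comp[OF T conjunct1[OF bracket_hom[OF t]] f]] bracket_hom[OF t]
  unfolding bracket_def by simp

lemma \<iota>_hom: "x \<in> Obj T \<Longrightarrow> t \<in> bracket T S x \<Longrightarrow> \<iota> x t \<in> hom A (fst F (Dom T t)) (P x)"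
  using coproduct_inj[OF coproduct] .

definition bracket_sum :: "('to,'tm,'ao,'am) ftor" where
  "bracket_sum = induced_functor T A P
     (\<lambda>f h. \<forall>t \<in> bracket T S (Dom T f). Cmp A h (\<iota> (Dom T f) t) = \<iota> (Cod T f) (Cmp T f t))"

lemma bracket_sum_arr_ex1:
  assumes f: "f \<in> hom T x y"
  shows "\<exists>!h. h \<in> hom A (P x) (P y) \<and> (\<forall>t \<in> bracket T S x. Cmp A h (\<iota> x t) = \<iota> y (Cmp T f t))"
proof (rule coproduct_copair[OF coproduct[OF cat_obj_dom[OF T f]]])
  show "P y \<in> Obj A" using coproduct_obj[OF coproduct[OF cat_obj_cod[OF T f]]] .
  fix t assume "t \<in> bracket T S x"
  then show "\<iota> y (Cmp T f t) \<in> hom A (fst F (Dom T t)) (P y)"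
    using \<iota>_hom[OF cat_obj_cod[OF T f]] bracket_comp[OF f] by metis
qed

lemma bracket_sum_arr:
  assumes f: "f \<in> hom T x y"
  shows "snd bracket_sum f \<in> hom A (P x) (P y) \<and>
    (\<forall>t \<in> bracket T S x. Cmp A (snd bracket_sum f) (\<iota> x t) = \<iota> y (Cmp T f t))"
proof -
  have "\<exists>!h. h \<in> hom A (P x) (P y) \<and>
      (\<forall>t \<in> bracket T S (Dom T f). Cmp A h (\<iota> (Dom T f) t) = \<iota> (Cod T f) (Cmp T f t))"
    using bracket_sum_arr_ex1[OF f] homD[OF f] by simp
  from induced_functor_arr[where R = P and \<Phi> = "\<lambda>f h. \<forall>t \<in> bracket T S (Dom T f).
      Cmp A h (\<iota> (Dom T f) t) = \<iota> (Cod T f) (Cmp T f t)", OF f this]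
  show ?thesis using homD[OF f] unfolding bracket_sum_def by simp
qed

lemma bracket_sum_functor: "is_functor T A bracket_sum"
  unfolding bracket_sum_def
proof (rule induced_functor_is_functor[OF A T])
  fix x assume x: "x \<in> Obj T"
  show "P x \<in> Obj A" using coproduct_obj[OF coproduct[OF x]] .
  show "\<forall>t \<in> bracket T S (Dom T (Idm T x)).
      Cmp A (Idm A (P x)) (\<iota> (Dom T (Idm T x)) t) = \<iota> (Cod T (Idm T x)) (Cmp T (Idm T x) t)"
    using homD[OF cat_id[OF T x]] cat_idl[OF A \<iota>_hom[OF x]] cat_idl[OF T conjunct1[OF bracket_hom]]
    by simp
next
  fix f x y assume f: "f \<in> hom T x y"
  then show "\<exists>!h. h \<in> hom A (P x) (P y) \<and> (\<forall>t \<in> bracket T S (Dom T f).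
      Cmp A h (\<iota> (Dom T f) t) = \<iota> (Cod T f) (Cmp T f t))"
    using bracket_sum_arr_ex1[OF f] homD[OF f] by simp
next
  fix f g h k x y z
  assume f: "f \<in> hom T x y" and g: "g \<in> hom T y z"
    and h: "h \<in> hom A (P x) (P y)"
      "\<forall>t \<in> bracket T S (Dom T f). Cmp A h (\<iota> (Dom T f) t) = \<iota> (Cod T f) (Cmp T f t)"
    and k: "k \<in> hom A (P y) (P z)"
      "\<forall>t \<in> bracket T S (Dom T g). Cmp A k (\<iota> (Dom T g) t) = \<iota> (Cod T g) (Cmp T g t)"
  have "Cmp A (Cmp A k h) (\<iota> x t) = \<iota> z (Cmp T (Cmp T g f) t)" if t: "t \<in> bracket T S x" for t
  proof -
    note x = cat_obj_dom[OF T f]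
    have "Cmp A (Cmp A k h) (\<iota> x t) = Cmp A k (\<iota> y (Cmp T f t))"
      using cat_assoc[OF A \<iota>_hom[OF x t] h(1) k(1)] h(2) t homD[OF f] by simp
    also have "\<dots> = \<iota> z (Cmp T g (Cmp T f t))"
      using k(2) bracket_comp[OF f t] homD[OF g] by simp
    finally show ?thesis
      using cat_assoc[OF T conjunct1[OF bracket_hom[OF t]] f g] by simp
  qed
  then show "\<forall>t \<in> bracket T S (Dom T (Cmp T g f)).
      Cmp A (Cmp A k h) (\<iota> (Dom T (Cmp T g f)) t) = \<iota> (Cod T (Cmp T g f)) (Cmp T (Cmp T g f) t)"
    using homD[OF cat_comp[OF T f g]] by simp
qed

lemma \<sigma>_nat_trans: "nat_trans T A bracket_sum F (\<lambda>x \<in> Obj T. \<sigma> x)"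
proof (rule nat_transI[OF bracket_sum_functor F])
  fix f x y assume f: "f \<in> hom T x y"
  note x = cat_obj_dom[OF T f] and y = cat_obj_cod[OF T f] and Pf = bracket_sum_arr[OF f]
  have "Cmp A (\<sigma> y) (snd bracket_sum f) = Cmp A (snd F f) (\<sigma> x)"
  proof (rule coproduct_arr_eqI[OF A coproduct[OF x] cat_comp[OF A conjunct1[OF Pf] \<sigma>_hom[OF y]]
        cat_comp[OF A \<sigma>_hom[OF x] functor_hom[OF F f]]])
    fix t assume t: "t \<in> bracket T S x"
    note tx = conjunct1[OF bracket_hom[OF t]]
    have "Cmp A (Cmp A (\<sigma> y) (snd bracket_sum f)) (\<iota> x t) = snd F (Cmp T f t)"
      using cat_assoc[OF A \<iota>_hom[OF x t] conjunct1[OF Pf] \<sigma>_hom[OF y]] Pf t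
        \<sigma>_\<iota>[OF y conjunct1[OF bracket_comp[OF f t]]] by simp
    also have "\<dots> = Cmp A (Cmp A (snd F f) (\<sigma> x)) (\<iota> x t)"
      using functor_comp[OF F tx f] \<sigma>_\<iota>[OF x t]
        cat_assoc[OF A \<iota>_hom[OF x t] \<sigma>_hom[OF x] functor_hom[OF F f]] by simp
    finally show "Cmp A (Cmp A (\<sigma> y) (snd bracket_sum f)) (\<iota> x t) =
        Cmp A (Cmp A (snd F f) (\<sigma> x)) (\<iota> x t)" .
  qed
  then show "Cmp A ((\<lambda>x \<in> Obj T. \<sigma> x) y) (snd bracket_sum f) =
      Cmp A (snd F f) ((\<lambda>x \<in> Obj T. \<sigma> x) x)"
    using x y by simp
qed (use \<sigma>_hom in \<open>simp_all add: bracket_sum_def induced_functor_obj\<close>)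

text \<open>Every F t with t \<in> [x] passes through G (Dom t) = 0 under a transformation \<theta> : F \<Rightarrow> G.\<close>

lemma vanishing_annihilates_\<sigma>:
  assumes G: "G \<in> vanishing_outside A T S" and \<theta>: "nat_trans T A F G \<theta>" and x: "x \<in> Obj T"
  shows "is_zero_arr A (Cmp A (\<theta> x) (\<sigma> x))"
proof (rule coproduct_zero_arrI[OF A pointed coproduct[OF x]
      cat_comp[OF A \<sigma>_hom[OF x] nat_trans_hom[OF \<theta> x]]])
  fix t assume t: "t \<in> bracket T S x"
  note tx = conjunct1[OF bracket_hom[OF t]]
  have "Cmp A (Cmp A (\<theta> x) (\<sigma> x)) (\<iota> x t) = Cmp A (snd G t) (\<theta> (Dom T t))"
    using cat_assoc[OF A \<iota>_hom[OF x t] \<sigma>_hom[OF x] nat_trans_hom[OF \<theta> x]] \<sigma>_\<iota>[OF x t]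
      nat_trans_natural[OF \<theta> tx] by simp
  moreover have "is_zero_obj A (fst G (Dom T t))"
    using G bracket_hom[OF t] cat_obj_dom[OF T tx] unfolding vanishing_outside_def by blast
  ultimately show "is_zero_arr A (Cmp A (Cmp A (\<theta> x) (\<sigma> x)) (\<iota> x t))"
    using zero_arr_through_zero_obj[OF A _ nat_trans_hom[OF \<theta> cat_obj_dom[OF T tx]]
        functor_hom[OF conjunct2[OF nat_trans_functors[OF \<theta>]] tx]] by simp
qed

text \<open>For x \<notin> S the identity of x lies in [x], so \<sigma> x is split epi and its cokernel is zero.\<close>

lemma cokernel_\<sigma>_zero:
  assumes x: "x \<in> Obj T" and "x \<notin> S" and ck: "is_cokernel A (\<sigma> x) q"
  shows "is_zero_obj A (Cod A q)"
proof -
  have id: "Idm T x \<in> bracket T S x"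
    using homD[OF cat_id[OF T x]] \<open>x \<notin> S\<close> unfolding bracket_def by simp
  then have \<iota>x: "\<iota> x (Idm T x) \<in> hom A (fst F x) (P x)"
    using \<iota>_hom[OF x] homD[OF cat_id[OF T x]] by metis
  have q: "q \<in> hom A (fst F x) (Cod A q)"
    using cokernel_hom[OF ck] homD[OF \<sigma>_hom[OF x]] by simp
  have "q = Cmp A (Cmp A q (\<sigma> x)) (\<iota> x (Idm T x))"
    using cat_assoc[OF A \<iota>x \<sigma>_hom[OF x] q] \<sigma>_\<iota>[OF x id] functor_id[OF F x] cat_idr[OF A q] by simp
  moreover have "is_zero_arr A (Cmp A (Cmp A q (\<sigma> x)) (\<iota> x (Idm T x)))"
    using zero_arr_comp_right[OF A cokernel_zero_comp[OF ck]] \<iota>x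
      homD[OF cat_comp[OF A \<sigma>_hom[OF x] q]] by simp
  ultimately show ?thesis
    using cokernel_zero_codomain[OF A pointed ck] by simp
qed

end

locale bracket_cokernel = bracket_copairing +
  fixes q
  assumes q_cokernel: "\<And>x. x \<in> Obj T \<Longrightarrow> is_cokernel A (\<sigma> x) (q x)"
begin

sublocale pointwise_cokernel A T bracket_sum F "\<lambda>x \<in> Obj T. \<sigma> x" q
  using A pointed T \<sigma>_nat_trans q_cokernel by unfold_locales simp_all

lemma R_eq: "R = ((\<lambda>x \<in> Obj T. Cod A (q x)), snd R)"
  by (simp add: R_def induced_functor_def)

lemma R_vanishing: "R \<in> vanishing_outside A T S"
  unfolding vanishing_outside_def using R_functor R_obj cokernel_\<sigma>_zero q_cokernel by auto

lemma reflection: "is_reflection (funcat A T) (vanishing_outside A T S) F R unit"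
proof -
  have "is_zero_arr (funcat A T) (Cmp (funcat A T) a (bracket_sum, F, \<lambda>x \<in> Obj T. \<sigma> x))"
    if G: "G \<in> vanishing_outside A T S" and a: "a \<in> hom (funcat A T) F G" for G a
  proof -
    obtain \<theta> where \<theta>: "a = (F, G, \<theta>)" "nat_trans T A F G \<theta>" using a by (rule funcat_homE)
    have "nat_trans T A bracket_sum G (\<lambda>x \<in> Obj T. Cmp A (\<theta> x) (\<sigma> x))"
      using nat_trans_vcomp[OF A T \<sigma>_nat_trans \<theta>(2)] by (simp cong: restrict_cong)
    moreover have "Cmp (funcat A T) a (bracket_sum, F, \<lambda>x \<in> Obj T. \<sigma> x) =
        (bracket_sum, G, \<lambda>x \<in> Obj T. Cmp A (\<theta> x) (\<sigma> x))"
      using \<theta>(1) by (simp cong: restrict_cong)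
    ultimately show ?thesis
      using funcat_zero_arr_iff[OF A T pointed] vanishing_annihilates_\<sigma>[OF G \<theta>(2)] by simp
  qed
  then show ?thesis
    using cokernel_reflection[OF funcat_cokernel] R_vanishing by simp
qed

lemma unit_normal_epi: "normal_epi (funcat A T) unit"
  unfolding normal_epi_def using funcat_cokernel by blast

end

lemma bracket_copairing_exists:
  assumes A: "category A" and "pointed A" and "has_finite_coproducts A"
    and T: "finite_category T" and F: "is_functor T A F"
  shows "\<exists>P \<iota> \<sigma>. bracket_copairing A T S F P \<iota> \<sigma>"
proof -
  have T': "category T" and "finite (Arr T)" using T unfolding finite_category_def by auto
  have "\<forall>x \<in> Obj T. \<exists>P\<iota>. is_coproduct A (bracket T S x) (\<lambda>t. fst F (Dom T t)) (fst P\<iota>) (snd P\<iota>)"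
  proof
    fix x
    have "finite (bracket T S x)"
      using \<open>finite (Arr T)\<close> unfolding bracket_def by simp
    moreover have "fst F (Dom T t) \<in> Obj A" if "t \<in> bracket T S x" for t
      using that functor_obj[OF F] T' unfolding bracket_def category_def by simp
    ultimately have "\<exists>P \<iota>. is_coproduct A (bracket T S x) (\<lambda>t. fst F (Dom T t)) P \<iota>"
      by (rule finite_coproduct_exists[OF \<open>has_finite_coproducts A\<close>])
    then obtain P \<iota> where "is_coproduct A (bracket T S x) (\<lambda>t. fst F (Dom T t)) P \<iota>" by blast
    then show "\<exists>P\<iota>. is_coproduct A (bracket T S x) (\<lambda>t. fst F (Dom T t)) (fst P\<iota>) (snd P\<iota>)"
      by (intro exI[of _ "(P, \<iota>)"]) simp
  qed
  then obtain P\<iota> where cp: "\<forall>x \<in> Obj T.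
      is_coproduct A (bracket T S x) (\<lambda>t. fst F (Dom T t)) (fst (P\<iota> x)) (snd (P\<iota> x))"
    by (metis bchoice)
  define P where "P x = fst (P\<iota> x)" for x
  define \<iota> where "\<iota> x = snd (P\<iota> x)" for x
  have "\<forall>x \<in> Obj T. \<exists>s. s \<in> hom A (P x) (fst F x) \<and> (\<forall>t \<in> bracket T S x. Cmp A s (\<iota> x t) = snd F t)"
  proof
    fix x assume x: "x \<in> Obj T"
    have "snd F t \<in> hom A (fst F (Dom T t)) (fst F x)" if "t \<in> bracket T S x" for t
      using functor_hom[OF F] that unfolding bracket_def hom_def by blast
    then show "\<exists>s. s \<in> hom A (P x) (fst F x) \<and> (\<forall>t \<in> bracket T S x. Cmp A s (\<iota> x t) = snd F t)"
      using coproduct_copair[OF bspec[OF cp x] functor_obj[OF F x]] unfolding P_def \<iota>_def by blast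
  qed
  then obtain \<sigma> where "\<forall>x \<in> Obj T. \<sigma> x \<in> hom A (P x) (fst F x) \<and>
      (\<forall>t \<in> bracket T S x. Cmp A (\<sigma> x) (\<iota> x t) = snd F t)"
    by (metis bchoice)
  then have "bracket_copairing A T S F P \<iota> \<sigma>"
    using A \<open>pointed A\<close> T' F cp unfolding P_def \<iota>_def by unfold_locales simp_all
  then show ?thesis by blast
qed

lemma bracket_cokernel_exists:
  assumes "category A" and "pointed A" and "has_finite_coproducts A" and "has_cokernels A"
    and "finite_category T" and "is_functor T A F"
  shows "\<exists>P \<iota> \<sigma> q. bracket_cokernel A T S F P \<iota> \<sigma> q"
proof -
  obtain P \<iota> \<sigma> where cp: "bracket_copairing A T S F P \<iota> \<sigma>"
    using bracket_copairing_exists[OF assms(1-3,5,6)] by blast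
  have "\<forall>x \<in> Obj T. \<exists>q. is_cokernel A (\<sigma> x) q"
    using bracket_copairing.\<sigma>_hom[OF cp] \<open>has_cokernels A\<close>
    unfolding has_cokernels_def hom_def by blast
  then obtain q where "\<forall>x \<in> Obj T. is_cokernel A (\<sigma> x) (q x)" by (metis bchoice)
  then have "bracket_cokernel A T S F P \<iota> \<sigma> q"
    using cp by (simp add: bracket_cokernel_def bracket_cokernel_axioms_def)
  then show ?thesis by blast
qed

lemma vanishing_outside_normal_epi_reflective:
  assumes A: "category A" and "pointed A" and "has_finite_coproducts A" and "has_cokernels A"
    and T: "finite_category T"
  shows "normal_epi_reflective (funcat A T) (vanishing_outside A T S)"
proof -
  let ?C = "funcat A T" and ?D = "vanishing_outside A T S"
  have C: "category ?C" using funcat_category[OF A] T unfolding finite_category_def by blast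
  have normal_unit: "\<exists>r u. is_reflection ?C ?D F r u \<and> normal_epi ?C u" if F: "F \<in> Obj ?C" for F
  proof -
    obtain P \<iota> \<sigma> q where "bracket_cokernel A T S F P \<iota> \<sigma> q"
      using bracket_cokernel_exists[OF assms, of F S] F by auto
    then interpret bracket_cokernel A T S F P \<iota> \<sigma> q .
    show ?thesis using reflection unit_normal_epi by blast
  qed
  show ?thesis
    unfolding normal_epi_reflective_def reflective_def
  proof (intro conjI allI impI ballI)
    show "?D \<subseteq> Obj ?C" by (auto simp: vanishing_outside_def)
  next
    fix F assume "F \<in> Obj ?C"
    then show "\<exists>r u. is_reflection ?C ?D F r u" using normal_unit by blast
  next
    fix F r' u' assume "F \<in> Obj ?C \<and> is_reflection ?C ?D F r' u'"
    then obtain r u where "is_reflection ?C ?D F r u" "normal_epi ?C u"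
      and "is_reflection ?C ?D F r' u'"
      using normal_unit by blast
    then show "normal_epi ?C u'" using normal_epi_reflection_unit[OF C] by blast
  qed
qed

lemma vanishing_outside_reflection_pointwise:
  assumes "category A" and "pointed A" and "category T" and "is_functor T A F"
    and data: "\<forall>x \<in> Obj T.
        is_coproduct A (bracket T S x) (\<lambda>t. fst F (Dom T t)) (P x) (\<iota> x) \<and>
        \<sigma> x \<in> hom A (P x) (fst F x) \<and> (\<forall>t \<in> bracket T S x. Cmp A (\<sigma> x) (\<iota> x t) = snd F t) \<and>
        is_cokernel A (\<sigma> x) (q x) \<and> R x = Cod A (q x)"
  shows "\<exists>Rm. is_functor T A (\<lambda>x \<in> Obj T. R x, Rm) \<and>
    is_reflection (funcat A T) (vanishing_outside A T S) F
      (\<lambda>x \<in> Obj T. R x, Rm) (F, (\<lambda>x \<in> Obj T. R x, Rm), (\<lambda>x \<in> Obj T. q x))"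
proof -
  interpret bracket_cokernel A T S F P \<iota> \<sigma> q
    using assms by unfold_locales simp_all
  have "(\<lambda>x \<in> Obj T. R x) = (\<lambda>x \<in> Obj T. Cod A (q x))"
    using data by (simp cong: restrict_cong)
  then show ?thesis using R_functor reflection R_eq by metis
qed

theorem mainTheorem2:
  fixes A :: "('ao,'am) cat" and T :: "('to,'tm) cat" and S :: "'to set"
  assumes "category A" and "pointed A" and "has_finite_coproducts A" and "has_cokernels A"
    and "finite_category T" and "replete_full_subcat T S"
  shows "normal_epi_reflective (funcat A T) (vanishing_outside A T S)
    \<and> (\<forall>F P \<iota> \<sigma> q R.
         is_functor T A F \<and>
         (\<forall>x \<in> Obj T.
            is_coproduct A (bracket T S x) (\<lambda>t. fst F (Dom T t)) (P x) (\<iota> x) \<and>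
            \<sigma> x \<in> hom A (P x) (fst F x) \<and>
            (\<forall>t \<in> bracket T S x. Cmp A (\<sigma> x) (\<iota> x t) = snd F t) \<and>
            is_cokernel A (\<sigma> x) (q x) \<and> R x = Cod A (q x))
         \<longrightarrow> (\<exists>Rm. is_functor T A (\<lambda>x \<in> Obj T. R x, Rm) \<and>
               is_reflection (funcat A T) (vanishing_outside A T S) F
                 (\<lambda>x \<in> Obj T. R x, Rm) (F, (\<lambda>x \<in> Obj T. R x, Rm), (\<lambda>x \<in> Obj T. q x))))"
proof -
  have "category T" using \<open>finite_category T\<close> unfolding finite_category_def by blast
  then show ?thesis
    using vanishing_outside_normal_epi_reflective[OF assms(1-5)]
      vanishing_outside_reflection_pointwise[OF assms(1,2)] by blast
qed

end
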